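(* Let $0<a<b<\infty$, $0<c<d<\infty$, $p,q>-1$ and $\alpha,\beta>0$. Suppose that $f:[a,b]\times[c,d]\to\mathbb{R}$ is continuous and of bounded variation in the sense of Arzelà. Then $$\dim_B\Big(G\big({}^{(p,q)}_{(a,c)}\mathfrak{I}^{(\alpha,\beta)}f\big)\Big)=\dim_H\Big(G\big({}^{(p,q)}_{(a,c)}\mathfrak{I}^{(\alpha,\beta)}f\big)\Big)=2.$$
   Context: For $f:[a,b]\times[c,d]\to\mathbb{R}$ with $0<a<b$, $0<c<d$, real $\alpha,\beta>0$ and $(p,q)\neq(-1,-1)$, the mixed Katugampola fractional integral is $$\big({}^{(p,q)}_{(a,c)}\mathfrak{I}^{(\alpha,\beta)}f\big)(x,y)=\frac{(p+1)^{1-\alpha}(q+1)^{1-\beta}}{\Gamma(\alpha)\Gamma(\beta)}\int_a^x\int_c^y (x^{p+1}-s^{p+1})^{\alpha-1}(y^{q+1}-t^{q+1})^{\beta-1}s^{p}t^{q}f(s,t)\,\mathrm{d}t\,\mathrm{d}s.$$ The graph of $g:[a,b]\times[c,d]\to\mathbb{R}$ is $G(g)=\{(x,y,g(x,y))\}\subset\mathbb{R}^3$; $\dim_H$, $\dim_B$ are Hausdorff and box dimension. Bounded variation in the sense of Arzelà: there is $K$ such that for all $m$ and all $a=x_0\le\dots\le x_m=b$, $c=y_0\le\dots\le y_m=d$, $\sum_{i=0}^{m-1}|f(x_{i+1},y_{i+1})-f(x_i,y_i)|\le K$. *)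

theory Defs
  imports "HOL-Analysis.Analysis"
begin

definition katugampola_int ::
  "real \<Rightarrow> real \<Rightarrow> real \<Rightarrow> real \<Rightarrow> real \<Rightarrow> real \<Rightarrow> (real \<Rightarrow> real \<Rightarrow> real) \<Rightarrow> real \<Rightarrow> real \<Rightarrow> real"
  where
  "katugampola_int p q a c \<alpha> \<beta> f x y =
     ((p + 1) powr (1 - \<alpha>) * (q + 1) powr (1 - \<beta>) / (Gamma \<alpha> * Gamma \<beta>)) *
     integral {a..x} (\<lambda>s. integral {c..y} (\<lambda>t.
        (x powr (p + 1) - s powr (p + 1)) powr (\<alpha> - 1) *
        (y powr (q + 1) - t powr (q + 1)) powr (\<beta> - 1) *
        s powr p * t powr q * f s t))"

definition graph2 :: "real \<Rightarrow> real \<Rightarrow> real \<Rightarrow> real \<Rightarrow> (real \<Rightarrow> real \<Rightarrow> real) \<Rightarrow> (real \<times> real \<times> real) set"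
  where "graph2 a b c d g = {(x, y, g x y) | x y. x \<in> {a..b} \<and> y \<in> {c..d}}"

definition arzela_bv :: "real \<Rightarrow> real \<Rightarrow> real \<Rightarrow> real \<Rightarrow> (real \<Rightarrow> real \<Rightarrow> real) \<Rightarrow> bool"
  where "arzela_bv a b c d f \<longleftrightarrow> (\<exists>K. \<forall>(m::nat) (xs::nat \<Rightarrow> real) (ys::nat \<Rightarrow> real).
     xs 0 = a \<and> xs m = b \<and> ys 0 = c \<and> ys m = d \<and>
     (\<forall>i<m. xs i \<le> xs (Suc i) \<and> ys i \<le> ys (Suc i)) \<longrightarrow>
     (\<Sum>i<m. \<bar>f (xs (Suc i)) (ys (Suc i)) - f (xs i) (ys i)\<bar>) \<le> K)"

definition hausdorff_approx :: "real \<Rightarrow> real \<Rightarrow> 'a::metric_space set \<Rightarrow> ennreal"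
  where "hausdorff_approx s \<delta> F =
     (INF U \<in> {U :: nat \<Rightarrow> 'a set. F \<subseteq> (\<Union>i. U i) \<and> (\<forall>i. bounded (U i) \<and> diameter (U i) \<le> \<delta>)}.
        (\<Sum>i. ennreal (diameter (U i) powr s)))"

definition hausdorff_measure :: "real \<Rightarrow> 'a::metric_space set \<Rightarrow> ennreal"
  where "hausdorff_measure s F = (SUP \<delta> \<in> {0<..}. hausdorff_approx s \<delta> F)"

definition hausdorff_dim :: "'a::metric_space set \<Rightarrow> real"
  where "hausdorff_dim F = Inf {s. s \<ge> 0 \<and> hausdorff_measure s F = 0}"

definition cover_number :: "real \<Rightarrow> 'a::metric_space set \<Rightarrow> nat"
  where "cover_number \<delta> F = (LEAST n. \<exists>U :: nat \<Rightarrow> 'a set.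
      F \<subseteq> (\<Union>i<n. U i) \<and> (\<forall>i<n. bounded (U i) \<and> diameter (U i) \<le> \<delta>))"

definition has_box_dim :: "'a::metric_space set \<Rightarrow> real \<Rightarrow> bool"
  where "has_box_dim F D \<longleftrightarrow>
     ((\<lambda>\<delta>. ln (real (cover_number \<delta> F)) / - ln \<delta>) \<longlongrightarrow> D) (at_right 0)"

end

theory Submission
  imports Defs
begin

text \<open>After the substitutions \<open>u = x powr (p+1)\<close>, \<open>v = y powr (q+1)\<close> the mixed Katugampola
  integral is a convolution of an integrable kernel with a bounded function \<open>G\<close> whose variation
  along monotone chains in the plane is bounded, which is what Arzela bounded variation of \<open>f\<close>
  provides. Along a monotone chain the increments of \<open>G\<close> are dominated by those of a bounded
  monotone majorant, so summing them over the cells of a uniform \<open>n \<times> n\<close> grid telescopes to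
  \<open>O(n)\<close>; the same then holds for the oscillation of the integral. Stacking boxes of side about
  \<open>1/n\<close> over the cells covers its graph by \<open>O(n\<^sup>2)\<close> sets of diameter about \<open>1/n\<close>, while any
  cover by sets of diameter \<open>\<delta>\<close> projects onto a cover of the rectangle and so has at least
  \<open>c / \<delta>\<^sup>2\<close> members.\<close>

section \<open>Power kernels and the substitution \<open>u = x powr P\<close>\<close>

definition frac_kernel :: "real \<Rightarrow> real \<Rightarrow> real \<Rightarrow> real" where
  "frac_kernel L \<gamma> u = indicator {L..0} u * (-u) powr (\<gamma> - 1)"

lemma frac_kernel_nonneg: "frac_kernel L \<gamma> u \<ge> 0"
  by (simp add: frac_kernel_def)

lemma borel_measurable_frac_kernel [measurable]: "frac_kernel L \<gamma> \<in> borel_measurable borel"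
  unfolding frac_kernel_def by measurable

lemma frac_kernel_has_integral:
  assumes "L \<le> 0" "\<gamma> > 0"
  shows "(frac_kernel L \<gamma> has_integral (-L) powr \<gamma> / \<gamma>) UNIV"
proof -
  have "((\<lambda>v. v powr (\<gamma>-1)) has_integral ((-L) powr (\<gamma>-1+1) / (\<gamma>-1+1))) {0..-L}"
    using assms by (intro has_integral_powr_from_0) auto
  hence "((\<lambda>v. v powr (\<gamma>-1)) has_integral ((-L) powr \<gamma> / \<gamma>)) {-0..-L}" by simp
  hence "((\<lambda>u. (-u) powr (\<gamma>-1)) has_integral ((-L) powr \<gamma> / \<gamma>)) {L..0}"
    using has_integral_reflect_real[where f="\<lambda>v. v powr (\<gamma>-1)" and a=0 and b="-L"] by simp
  hence "((\<lambda>u. if u \<in> {L..0} then (-u) powr (\<gamma>-1) else 0) has_integral ((-L) powr \<gamma> / \<gamma>)) UNIV"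
    by (subst has_integral_restrict_UNIV)
  thus ?thesis
    by (rule has_integral_eq[rotated]) (auto simp: frac_kernel_def indicator_def)
qed

lemma nn_integral_frac_kernel:
  assumes "L \<le> 0" "\<gamma> > 0"
  shows "(\<integral>\<^sup>+u. ennreal (frac_kernel L \<gamma> u) \<partial>lborel) = ennreal ((-L) powr \<gamma> / \<gamma>)"
  by (rule nn_integral_has_integral_lborel[OF _ _ frac_kernel_has_integral[OF assms]])
    (auto simp: frac_kernel_nonneg)

lemma integrable_frac_kernel:
  assumes "L \<le> 0" "\<gamma> > 0"
  shows "integrable lborel (frac_kernel L \<gamma>)"
  by (rule integrableI_nonneg) (auto simp: nn_integral_frac_kernel[OF assms] frac_kernel_nonneg)

lemma powr_root_in_Icc:
  fixes a b P W :: real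
  assumes "0 < a" "a \<le> b" "P > 0" "a powr P \<le> W" "W \<le> b powr P"
  shows "W powr (1/P) \<in> {a..b}"
proof -
  have W: "0 \<le> W" using assms by (smt (verit) powr_gt_zero)
  have "(a powr P) powr (1/P) \<le> W powr (1/P)" "W powr (1/P) \<le> (b powr P) powr (1/P)"
    using assms W by (auto intro!: powr_mono2)
  thus ?thesis using assms by (simp add: powr_powr)
qed

text \<open>The substitution \<open>s = (x powr P + u) powr (1/P)\<close> turns the weight
  \<open>(x powr P - s powr P) powr (\<gamma>-1) * s powr (P-1) ds\<close> into \<open>(-u) powr (\<gamma>-1) du / P\<close>.\<close>

lemma powr_substitution_factor:
  fixes P X u \<gamma> :: real
  assumes P: "P > 0" and w: "X + u > 0"
  shows "(X - ((X + u) powr (1/P)) powr P) powr (\<gamma>-1) * ((X + u) powr (1/P)) powr (P-1)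
      * ((1/P) * (X + u) powr (1/P - 1)) = (1/P) * (-u) powr (\<gamma>-1)"
proof -
  have gP: "((X + u) powr (1/P)) powr P = X + u" using w P by (simp add: powr_powr)
  have "((X + u) powr (1/P)) powr (P-1) * (X + u) powr (1/P - 1) = (X + u) powr ((P-1)/P + (1/P - 1))"
    using w by (simp add: powr_powr powr_add)
  also have "(P-1)/P + (1/P - 1) = 0" using P by (simp add: field_simps)
  finally have "((X + u) powr (1/P)) powr (P-1) * (X + u) powr (1/P - 1) = 1" using w by simp
  thus ?thesis unfolding gP by (simp add: algebra_simps)
qed

lemma powr_root_has_real_derivative:
  fixes P X u :: real
  assumes "X + u > 0"
  shows "((\<lambda>u. (X + u) powr (1/P)) has_real_derivative (1/P) * (X + u) powr (1/P - 1)) (at u)"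
  using assms by (auto intro!: derivative_eq_intros)

lemma continuous_on_powr_root_derivative:
  fixes P A X :: real
  assumes "A > 0"
  shows "continuous_on {A - X..0} (\<lambda>u. (1/P) * (X + u) powr (1/P - 1))"
  using assms by (intro continuous_intros) auto

lemma borel_measurable_powr_weight_indicator:
  fixes \<phi> :: "real \<Rightarrow> real"
  assumes \<phi>: "continuous_on {a..x} \<phi>"
  shows "(\<lambda>s. indicator {a..x} s *\<^sub>R ((X - s powr P) powr (\<gamma>-1) * s powr (P-1) * \<phi> s))
    \<in> borel_measurable borel"
proof -
  have "(\<lambda>s. indicator {a..x} s *\<^sub>R \<phi> s) \<in> borel_measurable borel"
    by (rule borel_measurable_continuous_on_indicator[OF _ \<phi>]) auto
  hence "(\<lambda>s. (X - s powr P) powr (\<gamma>-1) * s powr (P-1) * (indicator {a..x} s *\<^sub>R \<phi> s))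
      \<in> borel_measurable borel"
    by measurable
  moreover have "(\<lambda>s. (X - s powr P) powr (\<gamma>-1) * s powr (P-1) * (indicator {a..x} s *\<^sub>R \<phi> s))
      = (\<lambda>s. indicator {a..x} s *\<^sub>R ((X - s powr P) powr (\<gamma>-1) * s powr (P-1) * \<phi> s))"
    by (auto simp: indicator_def)
  ultimately show ?thesis by simp
qed

lemma set_integrable_powr_weight:
  fixes P \<gamma> a x :: real and \<phi> :: "real \<Rightarrow> real"
  assumes a: "0 < a" "a \<le> x" and P: "P > 0" and \<gamma>: "\<gamma> > 0" and \<phi>: "continuous_on {a..x} \<phi>"
  shows "set_integrable lborel {a..x} (\<lambda>s. (x powr P - s powr P) powr (\<gamma>-1) * s powr (P-1) * \<phi> s)"
proof -
  define X where "X = x powr P"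
  define A where "A = a powr P"
  define g where "g u = (X + u) powr (1/P)" for u
  define g' where "g' u = (1/P) * (X + u) powr (1/P - 1)" for u
  define h where "h s = (X - s powr P) powr (\<gamma>-1) * s powr (P-1) * \<phi> s" for s
  have A0: "A > 0" unfolding A_def using a by simp
  have AX: "A \<le> X" unfolding A_def X_def using a P by (intro powr_mono2) auto
  have pos: "X + u > 0" if "u \<in> {A - X..0}" for u using that A0 by auto
  have ga: "g (A - X) = a" and gx: "g 0 = x" unfolding g_def A_def X_def using a P by (simp_all add: powr_powr)
  have gin: "g u \<in> {a..x}" if "u \<in> {A - X..0}" for u
    unfolding g_def A_def X_def using that a P by (intro powr_root_in_Icc) (auto simp: A_def X_def)
  obtain M where M: "\<And>s. s \<in> {a..x} \<Longrightarrow> \<bar>\<phi> s\<bar> \<le> M"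
    using compact_imp_bounded[OF compact_continuous_image[OF \<phi> compact_Icc]]
    by (auto simp: bounded_iff) (metis atLeastAtMost_iff)
  have M0: "M \<ge> 0" using M[of a] a by auto
  have hmeas: "(\<lambda>s. indicator {a..x} s *\<^sub>R h s) \<in> borel_measurable borel"
    unfolding h_def by (rule borel_measurable_powr_weight_indicator[OF \<phi>])
  have deriv: "(g has_real_derivative g' u) (at u)" if "u \<in> {A - X..0}" for u
    unfolding g_def g'_def using pos[OF that] by (rule powr_root_has_real_derivative)
  have contg': "continuous_on {A - X..0} g'"
    unfolding g'_def using A0 by (rule continuous_on_powr_root_derivative)
  have g'nn: "g' u \<ge> 0" for u unfolding g'_def using P by simp
  have "(\<integral>\<^sup>+s. ennreal (\<bar>h s\<bar> * indicator {g (A - X)..g 0} s) \<partial>lborel)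
      = (\<integral>\<^sup>+u. ennreal (\<bar>h (g u)\<bar> * g' u * indicator {A - X..0} u) \<partial>lborel)"
  proof (rule nn_integral_substitution[OF _ deriv contg' g'nn])
    show "set_borel_measurable borel {g (A - X)..g 0} (\<lambda>s. \<bar>h s\<bar>)"
      unfolding set_borel_measurable_def ga gx using hmeas
      by (metis (no_types, lifting) borel_measurable_abs abs_mult abs_of_nonneg ext indicator_pos_le
          real_scaleR_def)
  qed (use AX in auto)
  also have "\<dots> \<le> (\<integral>\<^sup>+u. ennreal (M / P) * ennreal (frac_kernel (A - X) \<gamma> u) \<partial>lborel)"
  proof (intro nn_integral_mono)
    fix u
    show "ennreal (\<bar>h (g u)\<bar> * g' u * indicator {A - X..0} u)
        \<le> ennreal (M / P) * ennreal (frac_kernel (A - X) \<gamma> u)"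
    proof (cases "u \<in> {A - X..0}")
      case True
      have "\<bar>h (g u)\<bar> * g' u = (1/P) * ((-u) powr (\<gamma>-1) * \<bar>\<phi> (g u)\<bar>)"
        using powr_substitution_factor[OF P pos[OF True], of \<gamma>] P
        by (simp add: h_def g_def g'_def abs_mult algebra_simps)
      also have "\<dots> \<le> (1/P) * ((-u) powr (\<gamma>-1) * M)"
        using M[OF gin[OF True]] P by (intro mult_left_mono) auto
      finally show ?thesis using True M0 P
        by (simp add: frac_kernel_def ennreal_mult[symmetric] field_simps)
    qed simp
  qed
  also have "\<dots> = ennreal (M / P) * (\<integral>\<^sup>+u. ennreal (frac_kernel (A - X) \<gamma> u) \<partial>lborel)"
    by (rule nn_integral_cmult) measurable
  also have "\<dots> < \<infinity>"
    using nn_integral_frac_kernel[of "A - X" \<gamma>] AX \<gamma> by (simp add: ennreal_mult_less_top)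
  finally have fin: "(\<integral>\<^sup>+s. ennreal (\<bar>h s\<bar> * indicator {a..x} s) \<partial>lborel) < \<infinity>"
    unfolding ga gx .
  have "set_integrable lborel {a..x} h"
    unfolding set_integrable_def
  proof (rule integrableI_bounded)
    show "(\<lambda>s. indicator {a..x} s *\<^sub>R h s) \<in> borel_measurable lborel" using hmeas by simp
    show "(\<integral>\<^sup>+s. ennreal (norm (indicator {a..x} s *\<^sub>R h s)) \<partial>lborel) < \<infinity>"
      using fin by (simp add: abs_mult mult.commute)
  qed
  thus ?thesis unfolding h_def X_def .
qed

lemma integral_powr_weight_substitution:
  fixes P \<gamma> a x :: real and \<phi> :: "real \<Rightarrow> real"
  assumes a: "0 < a" "a \<le> x" and P: "P > 0" and \<gamma>: "\<gamma> > 0" and \<phi>: "continuous_on {a..x} \<phi>"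
  shows "integral {a..x} (\<lambda>s. (x powr P - s powr P) powr (\<gamma>-1) * s powr (P-1) * \<phi> s)
      = (1/P) * (LINT u|lborel. frac_kernel (a powr P - x powr P) \<gamma> u * \<phi> ((x powr P + u) powr (1/P)))"
    and "integrable lborel
      (\<lambda>u. frac_kernel (a powr P - x powr P) \<gamma> u * \<phi> ((x powr P + u) powr (1/P)))"
proof -
  define X where "X = x powr P"
  define A where "A = a powr P"
  define g where "g u = (X + u) powr (1/P)" for u
  define g' where "g' u = (1/P) * (X + u) powr (1/P - 1)" for u
  define h where "h s = (X - s powr P) powr (\<gamma>-1) * s powr (P-1) * \<phi> s" for s
  define k where "k = frac_kernel (A - X) \<gamma>"
  have A0: "A > 0" unfolding A_def using a by simp
  have AX: "A \<le> X" unfolding A_def X_def using a P by (intro powr_mono2) auto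
  have pos: "X + u > 0" if "u \<in> {A - X..0}" for u using that A0 by auto
  have ga: "g (A - X) = a" and gx: "g 0 = x" unfolding g_def A_def X_def using a P by (simp_all add: powr_powr)
  have hint: "set_integrable lborel {g (A - X)..g 0} h"
    unfolding ga gx unfolding h_def X_def by (rule set_integrable_powr_weight[OF assms])
  have deriv: "(g has_real_derivative g' u) (at u)" if "u \<in> {A - X..0}" for u
    unfolding g_def g'_def using pos[OF that] by (rule powr_root_has_real_derivative)
  have contg': "continuous_on {A - X..0} g'"
    unfolding g'_def using A0 by (rule continuous_on_powr_root_derivative)
  have g'nn: "g' u \<ge> 0" for u unfolding g'_def using P by simp
  note S = integral_substitution[OF hint deriv contg' g'nn]
  have eqfun: "(\<lambda>u. h (g u) * g' u * indicator {A - X..0} u) = (\<lambda>u. (1/P) * (k u * \<phi> (g u)))"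
    using powr_substitution_factor[OF P pos, of _ \<gamma>]
    by (auto simp: fun_eq_iff indicator_def k_def frac_kernel_def h_def g_def g'_def algebra_simps)
  have "integral {a..x} h = (LINT s:{a..x}|lborel. h s)"
    using set_borel_integral_eq_integral(2)[OF hint[unfolded ga gx]] by simp
  also have "\<dots> = (LINT s|lborel. h s * indicator {g (A - X)..g 0} s)"
    unfolding set_lebesgue_integral_def ga gx by (simp add: mult.commute)
  also have "\<dots> = (LINT u|lborel. h (g u) * g' u * indicator {A - X..0} u)"
    using S(2) AX by simp
  also have "\<dots> = (1/P) * (LINT u|lborel. k u * \<phi> (g u))"
    unfolding eqfun by simp
  finally show "integral {a..x} (\<lambda>s. (x powr P - s powr P) powr (\<gamma>-1) * s powr (P-1) * \<phi> s)
      = (1/P) * (LINT u|lborel. frac_kernel (a powr P - x powr P) \<gamma> u * \<phi> ((x powr P + u) powr (1/P)))"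
    unfolding h_def g_def X_def A_def k_def .
  have "integrable lborel (\<lambda>u. h (g u) * g' u * indicator {A - X..0} u)"
    using S(1) AX unfolding set_integrable_def by (simp add: mult.commute)
  hence "integrable lborel (\<lambda>u. (1/P) * (k u * \<phi> (g u)))"
    unfolding eqfun .
  hence "integrable lborel (\<lambda>u. k u * \<phi> (g u))"
    using P by (subst (asm) integrable_mult_left_iff) simp
  thus "integrable lborel
      (\<lambda>u. frac_kernel (a powr P - x powr P) \<gamma> u * \<phi> ((x powr P + u) powr (1/P)))"
    unfolding g_def X_def A_def k_def .
qed

section \<open>The mixed Katugampola integral as a convolution\<close>

lemma continuous_on_kernel_integral:
  fixes f :: "'a::metric_space \<Rightarrow> real \<Rightarrow> real" and k g :: "real \<Rightarrow> real"
  assumes fc: "continuous_on (S \<times> T) (\<lambda>(s, t). f s t)" and "compact S" "compact T"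
    and k: "integrable lborel k" "\<And>w. k w \<ge> 0"
    and g: "\<And>w. k w \<noteq> 0 \<Longrightarrow> g w \<in> T"
    and int: "\<And>s. s \<in> S \<Longrightarrow> integrable lborel (\<lambda>w. k w * f s (g w))"
  shows "continuous_on S (\<lambda>s. LINT w|lborel. k w * f s (g w))"
  unfolding continuous_on_iff
proof (intro ballI allI impI)
  fix s and e :: real assume s: "s \<in> S" and e: "e > 0"
  have uc: "uniformly_continuous_on (S \<times> T) (\<lambda>(s, t). f s t)"
    using compact_uniformly_continuous[OF fc] compact_Times assms(2,3) by blast
  define I where "I = (LINT w|lborel. k w)"
  have I0: "I \<ge> 0" unfolding I_def using k(2) by simp
  define e' where "e' = e / (I + 1)"
  have e': "e' > 0" unfolding e'_def using e I0 by simp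
  obtain dl where dl: "dl > 0" "\<And>z z'. z \<in> S \<times> T \<Longrightarrow> z' \<in> S \<times> T \<Longrightarrow> dist z' z < dl \<Longrightarrow>
      dist ((\<lambda>(s, t). f s t) z') ((\<lambda>(s, t). f s t) z) < e'"
    using uc e' unfolding uniformly_continuous_on_def by metis
  show "\<exists>dd>0. \<forall>s'\<in>S. dist s' s < dd \<longrightarrow>
      dist (LINT w|lborel. k w * f s' (g w)) (LINT w|lborel. k w * f s (g w)) < e"
  proof (intro exI[of _ dl] conjI ballI impI)
    fix s' assume s': "s' \<in> S" and ds: "dist s' s < dl"
    have pw: "\<bar>k w * f s' (g w) - k w * f s (g w)\<bar> \<le> k w * e'" for w
    proof (cases "k w = 0")
      case False
      have "dist (f s' (g w)) (f s (g w)) < e'"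
        using dl(2)[of "(s, g w)" "(s', g w)"] s s' ds g[OF False] by (auto simp: dist_Pair_Pair)
      hence "k w * \<bar>f s' (g w) - f s (g w)\<bar> \<le> k w * e'"
        using k(2) by (intro mult_left_mono) (auto simp: dist_real_def)
      thus ?thesis using k(2) by (simp add: abs_mult right_diff_distrib[symmetric])
    qed simp
    have "dist (LINT w|lborel. k w * f s' (g w)) (LINT w|lborel. k w * f s (g w))
        = \<bar>LINT w|lborel. k w * f s' (g w) - k w * f s (g w)\<bar>"
      using int[OF s] int[OF s'] by (simp add: dist_real_def)
    also have "\<dots> \<le> (LINT w|lborel. k w * e')"
      by (rule integral_abs_bound_integral) (use int[OF s] int[OF s'] k pw in auto)
    also have "\<dots> = I * e'" unfolding I_def by simp
    also have "\<dots> < e" unfolding e'_def using e I0 by (simp add: field_simps)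
    finally show "dist (LINT w|lborel. k w * f s' (g w)) (LINT w|lborel. k w * f s (g w)) < e" .
  qed (use dl in auto)
qed

definition frac_kernel_prod :: "real \<Rightarrow> real \<Rightarrow> real \<Rightarrow> real \<Rightarrow> real \<times> real \<Rightarrow> real" where
  "frac_kernel_prod \<alpha> \<beta> L1 L2 v = frac_kernel L1 \<alpha> (fst v) * frac_kernel L2 \<beta> (snd v)"

lemma frac_kernel_prod_nonneg: "frac_kernel_prod \<alpha> \<beta> L1 L2 v \<ge> 0"
  by (simp add: frac_kernel_prod_def frac_kernel_nonneg)

lemma borel_measurable_frac_kernel_prod [measurable]:
  "frac_kernel_prod \<alpha> \<beta> L1 L2 \<in> borel_measurable borel"
proof -
  have "frac_kernel_prod \<alpha> \<beta> L1 L2 \<in> borel_measurable (lborel \<Otimes>\<^sub>M lborel)"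
    unfolding frac_kernel_prod_def by measurable
  thus ?thesis by (simp add: lborel_prod)
qed

lemma integrable_frac_kernel_prod:
  assumes "L1 \<le> 0" "L2 \<le> 0" "\<alpha> > 0" "\<beta> > 0"
  shows "integrable lborel (frac_kernel_prod \<alpha> \<beta> L1 L2)"
proof -
  define k1 where "k1 = frac_kernel L1 \<alpha>"
  define k2 where "k2 = frac_kernel L2 \<beta>"
  have "(\<integral>\<^sup>+v. ennreal (frac_kernel_prod \<alpha> \<beta> L1 L2 v) \<partial>(lborel \<Otimes>\<^sub>M lborel))
      = (\<integral>\<^sup>+u. \<integral>\<^sup>+w. ennreal (k1 u) * ennreal (k2 w) \<partial>lborel \<partial>lborel)"
    by (subst lborel.nn_integral_fst[symmetric])
      (auto simp: frac_kernel_prod_def k1_def k2_def ennreal_mult frac_kernel_nonneg)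
  also have "\<dots> = (\<integral>\<^sup>+u. ennreal (k1 u) * (\<integral>\<^sup>+w. ennreal (k2 w) \<partial>lborel) \<partial>lborel)"
    unfolding k1_def k2_def by (intro nn_integral_cong nn_integral_cmult) measurable
  also have "\<dots> = (\<integral>\<^sup>+u. ennreal (k1 u) \<partial>lborel) * (\<integral>\<^sup>+w. ennreal (k2 w) \<partial>lborel)"
    unfolding k1_def k2_def by (intro nn_integral_multc) measurable
  also have "\<dots> < \<infinity>" unfolding k1_def k2_def using assms
    by (simp add: nn_integral_frac_kernel ennreal_mult_less_top)
  finally have "integrable (lborel \<Otimes>\<^sub>M lborel) (frac_kernel_prod \<alpha> \<beta> L1 L2)"
    by (intro integrableI_nonneg) (auto simp: frac_kernel_prod_nonneg lborel_prod)
  thus ?thesis by (simp add: lborel_prod)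
qed

lemma integrable_kernel_mult_shift:
  fixes \<Psi> G :: "real \<times> real \<Rightarrow> real"
  assumes "integrable lborel \<Psi>" "G \<in> borel_measurable borel" "\<And>z. \<bar>G z\<bar> \<le> M"
  shows "integrable lborel (\<lambda>v. \<Psi> v * G (Z + v))"
proof (rule Bochner_Integration.integrable_bound[where f="\<lambda>v. M * \<Psi> v"])
  show "integrable lborel (\<lambda>v. M * \<Psi> v)" using assms(1) by simp
  have "(\<lambda>v::real \<times> real. Z + v) \<in> borel_measurable borel"
    by (intro borel_measurable_continuous_onI continuous_intros)
  thus "(\<lambda>v. \<Psi> v * G (Z + v)) \<in> borel_measurable lborel"
    using borel_measurable_times[OF borel_measurable_integrable[OF assms(1)]
        measurable_compose[OF _ assms(2)]] by (simp add: o_def)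
  have "M \<ge> 0" using assms(3)[of 0] by linarith
  moreover have "\<bar>\<Psi> v\<bar> * \<bar>G (Z + v)\<bar> \<le> \<bar>\<Psi> v\<bar> * M" for v
    using assms(3) by (intro mult_left_mono) auto
  ultimately show "AE v in lborel. norm (\<Psi> v * G (Z + v)) \<le> norm (M * \<Psi> v)"
    by (intro AE_I2) (simp add: abs_mult mult.commute)
qed

definition root_clamp :: "real \<Rightarrow> real \<Rightarrow> real \<Rightarrow> real \<Rightarrow> real \<Rightarrow> real \<Rightarrow> real \<times> real \<Rightarrow> real \<times> real" where
  "root_clamp P Q a b c d Z =
     ((max (a powr P) (min (fst Z) (b powr P))) powr (1/P),
      (max (c powr Q) (min (snd Z) (d powr Q))) powr (1/Q))"

text \<open>The function \<open>f\<close> in the coordinates \<open>(x powr P, y powr Q)\<close>, extended to the plane by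
  zero below the image rectangle (this encodes the lower limits of integration) and by clamping
  above it.\<close>

definition power_coord_ext ::
  "real \<Rightarrow> real \<Rightarrow> real \<Rightarrow> real \<Rightarrow> real \<Rightarrow> real \<Rightarrow> (real \<Rightarrow> real \<Rightarrow> real) \<Rightarrow> real \<times> real \<Rightarrow> real"
  where "power_coord_ext P Q a b c d f Z =
     (if a powr P \<le> fst Z \<and> c powr Q \<le> snd Z then case_prod f (root_clamp P Q a b c d Z) else 0)"

lemma root_clamp_in_box:
  assumes "0 < a" "a \<le> b" "0 < c" "c \<le> d" "P > 0" "Q > 0"
  shows "root_clamp P Q a b c d Z \<in> {a..b} \<times> {c..d}"
proof -
  have AB: "a powr P \<le> b powr P" "c powr Q \<le> d powr Q" using assms by (auto intro!: powr_mono2)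
  have "(max (a powr P) (min (fst Z) (b powr P))) powr (1/P) \<in> {a..b}"
    by (rule powr_root_in_Icc) (use assms AB in auto)
  moreover have "(max (c powr Q) (min (snd Z) (d powr Q))) powr (1/Q) \<in> {c..d}"
    by (rule powr_root_in_Icc) (use assms AB in auto)
  ultimately show ?thesis unfolding root_clamp_def by simp
qed

lemma root_clamp_mono:
  assumes "0 < a" "0 < c" "P > 0" "Q > 0" "Z \<le> W"
  shows "root_clamp P Q a b c d Z \<le> root_clamp P Q a b c d W"
proof -
  have "fst Z \<le> fst W" "snd Z \<le> snd W" using assms(5) by (auto simp: less_eq_prod_def)
  hence "max (a powr P) (min (fst Z) (b powr P)) \<le> max (a powr P) (min (fst W) (b powr P))"
    "max (c powr Q) (min (snd Z) (d powr Q)) \<le> max (c powr Q) (min (snd W) (d powr Q))"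
    by auto
  moreover have "0 \<le> max (a powr P) (min (fst Z) (b powr P))"
    "0 \<le> max (c powr Q) (min (snd Z) (d powr Q))" using assms(1,2) by (auto simp: le_max_iff_disj)
  ultimately show ?thesis unfolding root_clamp_def using assms(3,4)
    by (auto intro!: powr_mono2)
qed

lemma continuous_on_root_clamp:
  assumes "0 < a" "0 < c"
  shows "continuous_on UNIV (root_clamp P Q a b c d)"
proof -
  have "a powr P > 0" "c powr Q > 0" using assms by auto
  thus ?thesis unfolding root_clamp_def by (intro continuous_intros) (auto simp: max_def min_def)
qed

lemma power_coord_ext_eq:
  assumes "0 < a" "0 < c" "P > 0" "Q > 0"
    and "a powr P \<le> U" "U \<le> b powr P" "c powr Q \<le> V" "V \<le> d powr Q"
  shows "power_coord_ext P Q a b c d f (U, V) = f (U powr (1/P)) (V powr (1/Q))"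
  using assms by (simp add: power_coord_ext_def root_clamp_def)

lemma abs_power_coord_ext_le:
  assumes "\<And>x y. x \<in> {a..b} \<Longrightarrow> y \<in> {c..d} \<Longrightarrow> \<bar>f x y\<bar> \<le> M" "M \<ge> 0"
    and "0 < a" "a \<le> b" "0 < c" "c \<le> d" "P > 0" "Q > 0"
  shows "\<bar>power_coord_ext P Q a b c d f Z\<bar> \<le> M"
  using root_clamp_in_box[OF assms(3-8), of Z] assms(1,2)
  by (auto simp: power_coord_ext_def split: prod.splits)

lemma borel_measurable_power_coord_ext:
  assumes fc: "continuous_on ({a..b} \<times> {c..d}) (\<lambda>(x, y). f x y)"
    and "0 < a" "a \<le> b" "0 < c" "c \<le> d" "P > 0" "Q > 0"
  shows "power_coord_ext P Q a b c d f \<in> borel_measurable borel"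
proof -
  have "continuous_on UNIV ((\<lambda>(x, y). f x y) \<circ> root_clamp P Q a b c d)"
  proof (intro continuous_on_compose continuous_on_root_clamp continuous_on_subset[OF fc])
    show "range (root_clamp P Q a b c d) \<subseteq> {a..b} \<times> {c..d}"
      using root_clamp_in_box[OF assms(2-7)] by blast
  qed (use assms in auto)
  hence m: "((\<lambda>(x, y). f x y) \<circ> root_clamp P Q a b c d) \<in> borel_measurable borel"
    by (rule borel_measurable_continuous_onI)
  have "power_coord_ext P Q a b c d f
      = (\<lambda>Z. indicator ({a powr P..} \<times> {c powr Q..}) Z * ((\<lambda>(x, y). f x y) \<circ> root_clamp P Q a b c d) Z)"
    by (auto simp: power_coord_ext_def fun_eq_iff indicator_def split: prod.splits)
  moreover have "{a powr P..} \<times> {c powr Q..} \<in> sets borel"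
    by (intro borel_closed closed_Times) auto
  ultimately show ?thesis
    using borel_measurable_times[OF borel_measurable_indicator m] by (simp add: o_def)
qed

lemma continuous_on_slice:
  fixes f :: "'a::topological_space \<Rightarrow> 'b::topological_space \<Rightarrow> 'c::topological_space"
  assumes "continuous_on (S \<times> T) (\<lambda>(x, y). f x y)" "s \<in> S"
  shows "continuous_on T (f s)"
proof -
  have "continuous_on T ((\<lambda>(x, y). f x y) \<circ> Pair s)"
    using assms by (intro continuous_on_compose continuous_intros) (auto elim: continuous_on_subset)
  thus ?thesis by (simp add: o_def)
qed

lemma continuous_on_rectangle_bound:
  fixes f :: "real \<Rightarrow> real \<Rightarrow> real"
  assumes "continuous_on ({a..b} \<times> {c..d}) (\<lambda>(x, y). f x y)"
  obtains M where "\<And>s t. s \<in> {a..b} \<Longrightarrow> t \<in> {c..d} \<Longrightarrow> \<bar>f s t\<bar> \<le> M" "M \<ge> 0"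
proof -
  obtain M where "\<forall>z \<in> (\<lambda>(x, y). f x y) ` ({a..b} \<times> {c..d}). norm z \<le> M"
    using compact_imp_bounded[OF compact_continuous_image[OF assms compact_Times[OF compact_Icc compact_Icc]]]
    by (auto simp: bounded_iff)
  hence "\<And>s t. s \<in> {a..b} \<Longrightarrow> t \<in> {c..d} \<Longrightarrow> \<bar>f s t\<bar> \<le> max M 0" by force
  thus ?thesis using that by force
qed

lemma frac_kernel_prod_power_coord_ext:
  fixes f :: "real \<Rightarrow> real \<Rightarrow> real"
  assumes "0 < a" "a \<le> x" "x \<le> b" "0 < c" "c \<le> y" "y \<le> d" "P > 0" "Q > 0"
  shows "frac_kernel_prod \<alpha> \<beta> (a powr P - b powr P) (c powr Q - d powr Q) (u, w)
        * power_coord_ext P Q a b c d f (x powr P + u, y powr Q + w)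
      = frac_kernel (a powr P - x powr P) \<alpha> u * (frac_kernel (c powr Q - y powr Q) \<beta> w
        * f ((x powr P + u) powr (1/P)) ((y powr Q + w) powr (1/Q)))"
proof -
  have AX: "a powr P \<le> x powr P" "x powr P \<le> b powr P"
    and CY: "c powr Q \<le> y powr Q" "y powr Q \<le> d powr Q"
    using assms by (auto intro!: powr_mono2)
  show ?thesis
  proof (cases "u \<in> {a powr P - x powr P..0} \<and> w \<in> {c powr Q - y powr Q..0}")
    case True
    hence "power_coord_ext P Q a b c d f (x powr P + u, y powr Q + w)
        = f ((x powr P + u) powr (1/P)) ((y powr Q + w) powr (1/Q))"
      using AX CY assms by (intro power_coord_ext_eq) auto
    thus ?thesis using True AX CY by (simp add: frac_kernel_prod_def frac_kernel_def)
  next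
    case False
    hence "frac_kernel (a powr P - x powr P) \<alpha> u * frac_kernel (c powr Q - y powr Q) \<beta> w = 0"
      by (auto simp: frac_kernel_def)
    moreover have "frac_kernel_prod \<alpha> \<beta> (a powr P - b powr P) (c powr Q - d powr Q) (u, w)
        * power_coord_ext P Q a b c d f (x powr P + u, y powr Q + w) = 0"
    proof (cases "u \<le> 0 \<and> w \<le> 0")
      case True
      hence "x powr P + u < a powr P \<or> y powr Q + w < c powr Q" using False by auto
      thus ?thesis by (auto simp: power_coord_ext_def)
    qed (auto simp: frac_kernel_prod_def frac_kernel_def)
    ultimately show ?thesis by (metis mult.assoc mult_zero_left)
  qed
qed

lemma continuous_on_frac_kernel_slice_integral:
  fixes f :: "real \<Rightarrow> real \<Rightarrow> real"
  assumes fc: "continuous_on ({a..b} \<times> {c..d}) (\<lambda>(x, y). f x y)"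
    and cy: "0 < c" "c \<le> y" "y \<le> d" and Q: "Q > 0" and \<beta>: "\<beta> > 0"
  shows "continuous_on {a..b}
    (\<lambda>s. LINT w|lborel. frac_kernel (c powr Q - y powr Q) \<beta> w * f s ((y powr Q + w) powr (1/Q)))"
proof (rule continuous_on_kernel_integral[OF fc compact_Icc compact_Icc])
  show "integrable lborel (frac_kernel (c powr Q - y powr Q) \<beta>)" using cy Q \<beta>
    by (intro integrable_frac_kernel) (auto intro: powr_mono2)
  show "(y powr Q + w) powr (1/Q) \<in> {c..d}" if "frac_kernel (c powr Q - y powr Q) \<beta> w \<noteq> 0" for w
  proof (rule powr_root_in_Icc)
    have "y powr Q \<le> d powr Q" using cy Q by (intro powr_mono2) auto
    thus "c powr Q \<le> y powr Q + w" "y powr Q + w \<le> d powr Q"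
      using that unfolding frac_kernel_def by (auto split: split_indicator_asm)
  qed (use cy Q in auto)
  show "integrable lborel (\<lambda>w. frac_kernel (c powr Q - y powr Q) \<beta> w * f s ((y powr Q + w) powr (1/Q)))"
    if "s \<in> {a..b}" for s
    by (rule integral_powr_weight_substitution(2))
      (use cy Q \<beta> continuous_on_subset[OF continuous_on_slice[OF fc that]] in auto)
qed (simp add: frac_kernel_nonneg)

lemma lebesgue_integral_frac_kernel_prod_power_coord_ext:
  fixes f :: "real \<Rightarrow> real \<Rightarrow> real"
  assumes fc: "continuous_on ({a..b} \<times> {c..d}) (\<lambda>(x, y). f x y)"
    and x: "0 < a" "a \<le> x" "x \<le> b" and y: "0 < c" "c \<le> y" "y \<le> d"
    and PQ: "P > 0" "Q > 0" and \<alpha>\<beta>: "\<alpha> > 0" "\<beta> > 0"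
  shows "(LINT v|lborel. frac_kernel_prod \<alpha> \<beta> (a powr P - b powr P) (c powr Q - d powr Q) v
        * power_coord_ext P Q a b c d f ((x powr P, y powr Q) + v))
    = (LINT u|lborel. frac_kernel (a powr P - x powr P) \<alpha> u * (LINT w|lborel.
        frac_kernel (c powr Q - y powr Q) \<beta> w * f ((x powr P + u) powr (1/P)) ((y powr Q + w) powr (1/Q))))"
proof -
  define H where "H v = frac_kernel_prod \<alpha> \<beta> (a powr P - b powr P) (c powr Q - d powr Q) v
      * power_coord_ext P Q a b c d f ((x powr P, y powr Q) + v)" for v
  obtain M where M: "\<And>s t. s \<in> {a..b} \<Longrightarrow> t \<in> {c..d} \<Longrightarrow> \<bar>f s t\<bar> \<le> M" "M \<ge> 0"
    using continuous_on_rectangle_bound[OF fc] by blast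
  have "integrable lborel H" unfolding H_def
    by (intro integrable_kernel_mult_shift[where M=M] integrable_frac_kernel_prod
        borel_measurable_power_coord_ext[OF fc] abs_power_coord_ext_le[OF M])
      (use x y PQ \<alpha>\<beta> in \<open>auto intro: powr_mono2\<close>)
  hence "integrable (lborel \<Otimes>\<^sub>M lborel) H" by (simp add: lborel_prod)
  hence "(LINT v|(lborel \<Otimes>\<^sub>M lborel). H v) = (LINT u|lborel. LINT w|lborel. H (u, w))"
    by (rule lborel_pair.integral_fst'[symmetric])
  thus ?thesis unfolding H_def
    by (simp add: lborel_prod frac_kernel_prod_power_coord_ext[OF x y PQ])
qed

lemma katugampola_int_eq_convolution:
  fixes f :: "real \<Rightarrow> real \<Rightarrow> real"
  assumes fc: "continuous_on ({a..b} \<times> {c..d}) (\<lambda>(x, y). f x y)"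
    and ab: "0 < a" "a \<le> b" "0 < c" "c \<le> d" and pq: "p > -1" "q > -1"
    and \<alpha>\<beta>: "\<alpha> > 0" "\<beta> > 0" and x: "x \<in> {a..b}" and y: "y \<in> {c..d}"
  shows "katugampola_int p q a c \<alpha> \<beta> f x y =
    (p + 1) powr (1 - \<alpha>) * (q + 1) powr (1 - \<beta>) / (Gamma \<alpha> * Gamma \<beta> * (p + 1) * (q + 1)) *
    (LINT v|lborel. frac_kernel_prod \<alpha> \<beta> (a powr (p+1) - b powr (p+1)) (c powr (q+1) - d powr (q+1)) v *
       power_coord_ext (p+1) (q+1) a b c d f ((x powr (p+1), y powr (q+1)) + v))"
proof -
  define P where "P = p + 1"
  define Q where "Q = q + 1"
  have P: "P > 0" and Q: "Q > 0" using pq unfolding P_def Q_def by auto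
  define X where "X = x powr P"
  define Y where "Y = y powr Q"
  define J where "J s = (LINT w|lborel. frac_kernel (c powr Q - Y) \<beta> w * f s ((Y + w) powr (1/Q)))"
    for s
  define Kc where "Kc = P powr (1 - \<alpha>) * Q powr (1 - \<beta>) / (Gamma \<alpha> * Gamma \<beta>)"
  have xa: "a \<le> x" "x \<le> b" and yc: "c \<le> y" "y \<le> d" using x y by auto
  have inner: "integral {c..y} (\<lambda>t. (X - s powr P) powr (\<alpha> - 1) * (Y - t powr Q) powr (\<beta> - 1)
        * s powr p * t powr q * f s t)
      = (1/Q) * ((X - s powr P) powr (\<alpha> - 1) * s powr (P - 1) * J s)" if s: "s \<in> {a..b}" for s
  proof -
    have "integral {c..y} (\<lambda>t. (y powr Q - t powr Q) powr (\<beta> - 1) * t powr (Q - 1) * f s t)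
        = (1/Q) * J s"
      unfolding J_def Y_def
      by (rule integral_powr_weight_substitution(1))
        (use ab yc Q \<alpha>\<beta> continuous_on_subset[OF continuous_on_slice[OF fc s]] in auto)
    moreover have "(\<lambda>t. (X - s powr P) powr (\<alpha> - 1) * (Y - t powr Q) powr (\<beta> - 1)
        * s powr p * t powr q * f s t) = (\<lambda>t. ((X - s powr P) powr (\<alpha> - 1) * s powr (P - 1))
        * ((y powr Q - t powr Q) powr (\<beta> - 1) * t powr (Q - 1) * f s t))"
      by (simp add: P_def Q_def Y_def fun_eq_iff algebra_simps)
    ultimately show ?thesis by simp
  qed
  have "katugampola_int p q a c \<alpha> \<beta> f x y
      = Kc * ((1/Q) * integral {a..x} (\<lambda>s. (X - s powr P) powr (\<alpha> - 1) * s powr (P - 1) * J s))"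
    unfolding katugampola_int_def P_def[symmetric] Q_def[symmetric] Kc_def[symmetric]
      X_def[symmetric] Y_def[symmetric]
    by (subst integral_cong[OF inner]) (use xa in auto)
  also have "integral {a..x} (\<lambda>s. (X - s powr P) powr (\<alpha> - 1) * s powr (P - 1) * J s)
      = (1/P) * (LINT u|lborel. frac_kernel (a powr P - X) \<alpha> u * J ((X + u) powr (1/P)))"
    unfolding X_def
    by (rule integral_powr_weight_substitution(1))
      (use ab xa P \<alpha>\<beta> continuous_on_frac_kernel_slice_integral[OF fc ab(3) yc Q \<alpha>\<beta>(2)] in
        \<open>auto simp: J_def Y_def elim: continuous_on_subset\<close>)
  also have "(LINT u|lborel. frac_kernel (a powr P - X) \<alpha> u * J ((X + u) powr (1/P)))
      = (LINT v|lborel. frac_kernel_prod \<alpha> \<beta> (a powr P - b powr P) (c powr Q - d powr Q) v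
          * power_coord_ext P Q a b c d f ((X, Y) + v))"
    unfolding J_def X_def Y_def
    by (rule lebesgue_integral_frac_kernel_prod_power_coord_ext[symmetric, OF fc ab(1) xa ab(3) yc P Q \<alpha>\<beta>])
  finally show ?thesis unfolding Kc_def X_def Y_def P_def Q_def by (simp add: mult_ac)
qed

section \<open>Variation along monotone chains\<close>

fun chain_variation :: "('a \<Rightarrow> real) \<Rightarrow> 'a list \<Rightarrow> real" where
  "chain_variation h (z1 # z2 # zs) = \<bar>h z2 - h z1\<bar> + chain_variation h (z2 # zs)"
| "chain_variation h _ = 0"

lemma chain_variation_nonneg: "chain_variation h L \<ge> 0"
  by (induction h L rule: chain_variation.induct) auto

lemma chain_variation_append2:
  "chain_variation h (L @ [z, w]) = chain_variation h (L @ [z]) + \<bar>h w - h z\<bar>"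
  by (induction L rule: induct_list012) auto

lemma chain_variation_Cons_ge: "chain_variation h L \<le> chain_variation h (x # L)"
  by (cases L) (auto simp: chain_variation_nonneg)

lemma chain_variation_snoc_ge: "chain_variation h L \<le> chain_variation h (L @ [w])"
  by (induction L rule: induct_list012) (auto simp: chain_variation_nonneg)

lemma chain_variation_conv_sum:
  "chain_variation h L = (\<Sum>i < length L - 1. \<bar>h (L ! Suc i) - h (L ! i)\<bar>)"
proof (induction L rule: induct_list012)
  case (3 x y zs)
  have "chain_variation h (x # y # zs) = \<bar>h y - h x\<bar> + chain_variation h (y # zs)" by simp
  also have "chain_variation h (y # zs) = (\<Sum>i < length zs. \<bar>h ((y # zs) ! Suc i) - h ((y # zs) ! i)\<bar>)"
    using 3(2) by simp
  also have "\<bar>h y - h x\<bar> + \<dots>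
      = (\<Sum>i < Suc (length zs). \<bar>h ((x # y # zs) ! Suc i) - h ((x # y # zs) ! i)\<bar>)"
    by (subst sum.lessThan_Suc_shift) simp
  finally show ?case by simp
qed auto

lemma chain_variation_map: "chain_variation h (map g L) = chain_variation (h \<circ> g) L"
  by (induction L rule: induct_list012) auto

lemma chain_variation_cong:
  "(\<And>z. z \<in> set L \<Longrightarrow> h z = h' z) \<Longrightarrow> chain_variation h L = chain_variation h' L"
  by (induction L rule: induct_list012) auto

lemma arzela_bv_imp_chain_variation_bounded:
  assumes "arzela_bv a b c d f" "a \<le> b" "c \<le> d"
  obtains K where "\<And>L. sorted_wrt (\<le>) L \<Longrightarrow> set L \<subseteq> {a..b} \<times> {c..d} \<Longrightarrow>
    chain_variation (case_prod f) L \<le> K"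
proof -
  obtain K where K: "\<And>m xs ys. xs 0 = a \<Longrightarrow> xs m = b \<Longrightarrow> ys 0 = c \<Longrightarrow> ys m = d \<Longrightarrow>
     (\<forall>i<m. xs i \<le> xs (Suc i) \<and> ys i \<le> ys (Suc i)) \<Longrightarrow>
     (\<Sum>i<m. \<bar>f (xs (Suc i)) (ys (Suc i)) - f (xs i) (ys i)\<bar>) \<le> K"
    using assms unfolding arzela_bv_def by blast
  have "chain_variation (case_prod f) L \<le> K"
    if L: "sorted_wrt (\<le>) L" "set L \<subseteq> {a..b} \<times> {c..d}" for L
  proof -
    define L' where "L' = (a, c) # L @ [(b, d)]"
    have s: "sorted_wrt (\<le>) L'" unfolding L'_def using L assms(2,3)
      by (auto simp: sorted_wrt_append less_eq_prod_def subset_iff)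
    define m where "m = length L' - 1"
    have lm: "length L' = Suc m" unfolding m_def L'_def by simp
    have "chain_variation (case_prod f) L \<le> chain_variation (case_prod f) L'"
      unfolding L'_def using chain_variation_Cons_ge chain_variation_snoc_ge order_trans
      by (metis append_Cons)
    also have "\<dots> = (\<Sum>i<m. \<bar>f (fst (L' ! Suc i)) (snd (L' ! Suc i)) - f (fst (L' ! i)) (snd (L' ! i))\<bar>)"
      unfolding chain_variation_conv_sum m_def by (simp add: case_prod_beta)
    also have "\<dots> \<le> K"
    proof (rule K)
      show "fst (L' ! 0) = a" "snd (L' ! 0) = c" unfolding L'_def by auto
      have "L' \<noteq> []" unfolding L'_def by simp
      hence "L' ! m = last L'" using lm by (simp add: last_conv_nth)
      thus "fst (L' ! m) = b" "snd (L' ! m) = d" unfolding L'_def by auto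
      show "\<forall>i<m. fst (L' ! i) \<le> fst (L' ! Suc i) \<and> snd (L' ! i) \<le> snd (L' ! Suc i)"
        using s lm by (auto simp: sorted_wrt_iff_nth_less less_eq_prod_def)
    qed
    finally show ?thesis .
  qed
  thus ?thesis using that by blast
qed

text \<open>Two-dimensional analogue of the variation function \<open>x \<mapsto> Var(G, [a, x])\<close> of a function
  of bounded variation on an interval.\<close>

definition variation_majorant :: "('a::order \<Rightarrow> real) \<Rightarrow> 'a \<Rightarrow> real" where
  "variation_majorant G z = Sup {chain_variation G (L @ [z]) | L. sorted_wrt (\<le>) (L @ [z])}"

lemma variation_majorant:
  fixes G :: "'a::order \<Rightarrow> real"
  assumes K: "\<And>L. sorted_wrt (\<le>) L \<Longrightarrow> chain_variation G L \<le> K"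
  shows "0 \<le> variation_majorant G z" "variation_majorant G z \<le> K"
    and "z \<le> w \<Longrightarrow> variation_majorant G z + \<bar>G w - G z\<bar> \<le> variation_majorant G w"
proof -
  let ?S = "\<lambda>z. {chain_variation G (L @ [z]) | L. sorted_wrt (\<le>) (L @ [z])}"
  have ne: "?S z \<noteq> {}" for z by (auto intro!: exI[of _ "[]"])
  have bdd: "bdd_above (?S z)" for z using K by (auto simp: bdd_above_def)
  have "chain_variation G ([] @ [z]) \<in> ?S z" by (intro CollectI exI[of _ "[]"]) simp
  thus "0 \<le> variation_majorant G z"
    unfolding variation_majorant_def using bdd[of z] cSup_upper[of _ "?S z"] by force
  show "variation_majorant G z \<le> K"
    unfolding variation_majorant_def by (rule cSup_least[OF ne]) (use K in auto)
  assume zw: "z \<le> w"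
  have "v \<le> variation_majorant G w - \<bar>G w - G z\<bar>" if vS: "v \<in> ?S z" for v
  proof -
    obtain L where L: "v = chain_variation G (L @ [z])" "sorted_wrt (\<le>) (L @ [z])" using vS by blast
    have "sorted_wrt (\<le>) ((L @ [z]) @ [w])"
      using L(2) zw by (auto simp: sorted_wrt_append intro: order_trans)
    hence "chain_variation G ((L @ [z]) @ [w]) \<in> ?S w" by blast
    hence "chain_variation G (L @ [z, w]) \<in> ?S w" by simp
    hence "chain_variation G (L @ [z, w]) \<le> variation_majorant G w"
      unfolding variation_majorant_def using bdd[of w] by (rule cSup_upper)
    thus ?thesis using L(1) chain_variation_append2[of G L z w] by simp
  qed
  hence "variation_majorant G z \<le> variation_majorant G w - \<bar>G w - G z\<bar>"
    unfolding variation_majorant_def using ne by (intro cSup_least) auto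
  thus "variation_majorant G z + \<bar>G w - G z\<bar> \<le> variation_majorant G w" by simp
qed

lemma grid_telescope_le:
  fixes V :: "real \<times> real \<Rightarrow> real" and \<xi> \<eta> :: "nat \<Rightarrow> real"
  assumes "\<And>z. 0 \<le> V z" "\<And>z. V z \<le> K"
  shows "(\<Sum>i<n. \<Sum>j<n. V (\<xi> (Suc i), \<eta> (Suc j)) - V (\<xi> i, \<eta> j)) \<le> 2 * real n * K"
proof -
  have "(\<Sum>i<n. \<Sum>j<n. V (\<xi> (Suc i), \<eta> (Suc j)) - V (\<xi> i, \<eta> (Suc j)))
      = (\<Sum>j<n. \<Sum>i<n. V (\<xi> (Suc i), \<eta> (Suc j)) - V (\<xi> i, \<eta> (Suc j)))" by (rule sum.swap)
  also have "\<dots> = (\<Sum>j<n. V (\<xi> n, \<eta> (Suc j)) - V (\<xi> 0, \<eta> (Suc j)))"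
    by (intro sum.cong refl) (rule sum_lessThan_telescope)
  also have "\<dots> \<le> (\<Sum>j<n. K)" by (intro sum_mono) (smt (verit) assms)
  finally have rows: "(\<Sum>i<n. \<Sum>j<n. V (\<xi> (Suc i), \<eta> (Suc j)) - V (\<xi> i, \<eta> (Suc j))) \<le> real n * K"
    by simp
  have "(\<Sum>i<n. \<Sum>j<n. V (\<xi> i, \<eta> (Suc j)) - V (\<xi> i, \<eta> j)) = (\<Sum>i<n. V (\<xi> i, \<eta> n) - V (\<xi> i, \<eta> 0))"
    by (intro sum.cong refl) (rule sum_lessThan_telescope)
  also have "\<dots> \<le> (\<Sum>i<n. K)" by (intro sum_mono) (smt (verit) assms)
  finally have cols: "(\<Sum>i<n. \<Sum>j<n. V (\<xi> i, \<eta> (Suc j)) - V (\<xi> i, \<eta> j)) \<le> real n * K"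
    by simp
  have "(\<Sum>i<n. \<Sum>j<n. V (\<xi> (Suc i), \<eta> (Suc j)) - V (\<xi> i, \<eta> j))
      = (\<Sum>i<n. \<Sum>j<n. V (\<xi> (Suc i), \<eta> (Suc j)) - V (\<xi> i, \<eta> (Suc j)))
        + (\<Sum>i<n. \<Sum>j<n. V (\<xi> i, \<eta> (Suc j)) - V (\<xi> i, \<eta> j))"
    by (simp only: sum.distrib[symmetric]) (intro sum.cong refl; simp)
  thus ?thesis using rows cols by linarith
qed

text \<open>Each increment is bounded by the increment of the variation majorant between the two
  corners of its cell, and those telescope.\<close>

lemma grid_increment_sum_le:
  fixes G :: "real \<times> real \<Rightarrow> real" and \<xi> \<eta> :: "nat \<Rightarrow> real" and W :: "nat \<Rightarrow> nat \<Rightarrow> real \<times> real"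
  assumes K: "\<And>L. sorted_wrt (\<le>) L \<Longrightarrow> chain_variation G L \<le> K"
    and W: "\<And>i j. (\<xi> i, \<eta> j) \<le> W i j" "\<And>i j. W i j \<le> (\<xi> (Suc i), \<eta> (Suc j))"
  shows "(\<Sum>i<n. \<Sum>j<n. \<bar>G (W i j) - G (\<xi> i, \<eta> j)\<bar>) \<le> 2 * real n * K"
proof -
  have V: "0 \<le> variation_majorant G z" "variation_majorant G z \<le> K" for z
    by (rule variation_majorant; use K in auto)+
  have V3: "variation_majorant G z + \<bar>G w - G z\<bar> \<le> variation_majorant G w" if "z \<le> w" for z w
    by (rule variation_majorant(3)) (use K that in auto)
  have "\<bar>G (W i j) - G (\<xi> i, \<eta> j)\<bar>
      \<le> variation_majorant G (\<xi> (Suc i), \<eta> (Suc j)) - variation_majorant G (\<xi> i, \<eta> j)" for i j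
    using V3[OF W(1)[of i j]] V3[OF W(2)[of i j]] by linarith
  hence "(\<Sum>i<n. \<Sum>j<n. \<bar>G (W i j) - G (\<xi> i, \<eta> j)\<bar>)
      \<le> (\<Sum>i<n. \<Sum>j<n. variation_majorant G (\<xi> (Suc i), \<eta> (Suc j)) - variation_majorant G (\<xi> i, \<eta> j))"
    by (intro sum_mono) auto
  also have "\<dots> \<le> 2 * real n * K" by (rule grid_telescope_le) (use V in auto)
  finally show ?thesis .
qed

lemma chain_variation_zero_extension_le:
  fixes G :: "'a::order \<Rightarrow> real"
  assumes up: "\<And>z w. z \<in> R \<Longrightarrow> z \<le> w \<Longrightarrow> w \<in> R" and zero: "\<And>z. z \<notin> R \<Longrightarrow> G z = 0"
    and inside: "\<And>L. sorted_wrt (\<le>) L \<Longrightarrow> set L \<subseteq> R \<Longrightarrow> chain_variation G L \<le> K"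
    and bound: "\<And>z. \<bar>G z\<bar> \<le> M"
    and L: "sorted_wrt (\<le>) L"
  shows "chain_variation G L \<le> K + M"
  using L
proof (induction L rule: induct_list012)
  case (3 x y zs)
  have K0: "0 \<le> K" and M0: "0 \<le> M" using inside[of "[]"] bound[of x] by auto
  have tail: "set zs' \<subseteq> R" if "sorted_wrt (\<le>) (z # zs')" "z \<in> R" for z zs'
    using that up by auto
  show ?case
  proof (cases "x \<in> R")
    case True
    thus ?thesis using inside[OF "3.prems"] tail[OF "3.prems"] M0 by auto
  next
    case x: False
    show ?thesis
    proof (cases "y \<in> R")
      case True
      have "chain_variation G (y # zs) \<le> K"
        using inside "3.prems" tail[of y zs] True by auto
      thus ?thesis using zero[OF x] bound[of y] by simp
    next
      case False
      thus ?thesis using "3.IH"(2) "3.prems" zero x by simp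
    qed
  qed
qed (use inside[of "[]"] bound in \<open>auto intro: add_nonneg_nonneg order_trans[OF abs_ge_zero]\<close>)

lemma chain_variation_power_coord_ext_le:
  fixes f :: "real \<Rightarrow> real \<Rightarrow> real"
  assumes Kf: "\<And>L. sorted_wrt (\<le>) L \<Longrightarrow> set L \<subseteq> {a..b} \<times> {c..d} \<Longrightarrow>
      chain_variation (case_prod f) L \<le> Kf"
    and M: "\<And>x y. x \<in> {a..b} \<Longrightarrow> y \<in> {c..d} \<Longrightarrow> \<bar>f x y\<bar> \<le> M" "M \<ge> 0"
    and ab: "0 < a" "a \<le> b" "0 < c" "c \<le> d" and PQ: "P > 0" "Q > 0"
    and L: "sorted_wrt (\<le>) L"
  shows "chain_variation (power_coord_ext P Q a b c d f) L \<le> Kf + M"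
proof (rule chain_variation_zero_extension_le[OF _ _ _ _ L])
  let ?R = "{z. a powr P \<le> fst z \<and> c powr Q \<le> snd z}"
  show "z \<in> ?R \<Longrightarrow> z \<le> w \<Longrightarrow> w \<in> ?R" for z w by (auto simp: less_eq_prod_def)
  show "z \<notin> ?R \<Longrightarrow> power_coord_ext P Q a b c d f z = 0" for z by (auto simp: power_coord_ext_def)
  show "\<bar>power_coord_ext P Q a b c d f z\<bar> \<le> M" for z by (rule abs_power_coord_ext_le[OF M ab PQ])
  fix L' assume L': "sorted_wrt (\<le>) L'" "set L' \<subseteq> ?R"
  have "chain_variation (power_coord_ext P Q a b c d f) L'
      = chain_variation (case_prod f \<circ> root_clamp P Q a b c d) L'"
    by (rule chain_variation_cong) (use L'(2) in \<open>auto simp: power_coord_ext_def\<close>)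
  also have "\<dots> = chain_variation (case_prod f) (map (root_clamp P Q a b c d) L')"
    by (simp add: chain_variation_map)
  also have "\<dots> \<le> Kf"
  proof (rule Kf)
    show "sorted_wrt (\<le>) (map (root_clamp P Q a b c d) L')"
      using L'(1) root_clamp_mono[OF ab(1,3) PQ]
      by (auto simp: sorted_wrt_map elim: sorted_wrt_mono_rel[rotated])
    show "set (map (root_clamp P Q a b c d) L') \<subseteq> {a..b} \<times> {c..d}"
      using root_clamp_in_box[OF ab PQ] by (simp add: image_subset_iff)
  qed
  finally show "chain_variation (power_coord_ext P Q a b c d f) L' \<le> Kf" .
qed

lemma grid_increment_sum_convolution_le:
  fixes \<Psi> G :: "real \<times> real \<Rightarrow> real" and \<xi> \<eta> :: "nat \<Rightarrow> real" and W :: "nat \<Rightarrow> nat \<Rightarrow> real \<times> real"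
  assumes \<Psi>: "integrable lborel \<Psi>" "\<And>v. \<Psi> v \<ge> 0"
    and G: "G \<in> borel_measurable borel" "\<And>z. \<bar>G z\<bar> \<le> M"
    and K: "\<And>L. sorted_wrt (\<le>) L \<Longrightarrow> chain_variation G L \<le> K"
    and W: "\<And>i j. (\<xi> i, \<eta> j) \<le> W i j" "\<And>i j. W i j \<le> (\<xi> (Suc i), \<eta> (Suc j))"
  shows "(\<Sum>i<n. \<Sum>j<n. \<bar>(LINT v|lborel. \<Psi> v * G (W i j + v)) - (LINT v|lborel. \<Psi> v * G ((\<xi> i, \<eta> j) + v))\<bar>)
     \<le> 2 * real n * K * (LINT v|lborel. \<Psi> v)"
proof -
  note int = integrable_kernel_mult_shift[OF \<Psi>(1) G]
  define D where "D i j v = \<bar>\<Psi> v * G (W i j + v) - \<Psi> v * G ((\<xi> i, \<eta> j) + v)\<bar>" for i j v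
  have Dint: "integrable lborel (D i j)" for i j unfolding D_def using int by auto
  have "\<bar>(LINT v|lborel. \<Psi> v * G (W i j + v)) - (LINT v|lborel. \<Psi> v * G ((\<xi> i, \<eta> j) + v))\<bar>
      \<le> (LINT v|lborel. D i j v)" for i j
    unfolding D_def using integral_norm_bound[of lborel "\<lambda>v. \<Psi> v * G (W i j + v) - \<Psi> v * G ((\<xi> i, \<eta> j) + v)"]
    by (simp add: int)
  hence "(\<Sum>i<n. \<Sum>j<n. \<bar>(LINT v|lborel. \<Psi> v * G (W i j + v)) - (LINT v|lborel. \<Psi> v * G ((\<xi> i, \<eta> j) + v))\<bar>)
      \<le> (\<Sum>i<n. \<Sum>j<n. (LINT v|lborel. D i j v))" by (intro sum_mono) auto
  also have "\<dots> = (LINT v|lborel. (\<Sum>i<n. \<Sum>j<n. D i j v))"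
    using Dint by (simp add: integral_sum)
  also have "\<dots> \<le> (LINT v|lborel. 2 * real n * K * \<Psi> v)"
  proof (rule integral_mono)
    show "integrable lborel (\<lambda>v. \<Sum>i<n. \<Sum>j<n. D i j v)" using Dint by auto
    show "integrable lborel (\<lambda>v. 2 * real n * K * \<Psi> v)" using \<Psi> by simp
    fix v :: "real \<times> real"
    have "(\<Sum>i<n. \<Sum>j<n. D i j v)
        = \<Psi> v * (\<Sum>i<n. \<Sum>j<n. \<bar>G (W i j + v) - G (\<xi> i + fst v, \<eta> j + snd v)\<bar>)"
      unfolding D_def using \<Psi>(2)[of v]
      by (simp add: sum_distrib_left abs_mult right_diff_distrib[symmetric] plus_prod_def)
    also have "\<dots> \<le> \<Psi> v * (2 * real n * K)"
      using W by (intro mult_left_mono[OF _ \<Psi>(2)] grid_increment_sum_le[OF K])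
        (auto simp: less_eq_prod_def)
    finally show "(\<Sum>i<n. \<Sum>j<n. D i j v) \<le> 2 * real n * K * \<Psi> v" by (simp add: mult_ac)
  qed
  also have "\<dots> = 2 * real n * K * (LINT v|lborel. \<Psi> v)" by simp
  finally show ?thesis .
qed

section \<open>Oscillation on uniform grids\<close>

definition grid_node :: "real \<Rightarrow> real \<Rightarrow> nat \<Rightarrow> nat \<Rightarrow> real" where
  "grid_node a b n i = a + real i * (b - a) / real n"

definition bounded_grid_oscillation ::
  "real \<Rightarrow> real \<Rightarrow> real \<Rightarrow> real \<Rightarrow> (real \<Rightarrow> real \<Rightarrow> real) \<Rightarrow> real \<Rightarrow> bool" where
  "bounded_grid_oscillation a b c d F C \<longleftrightarrow> (\<forall>n wx wy.
     (\<forall>i<n. \<forall>j<n. wx i j \<in> {grid_node a b n i..grid_node a b n (Suc i)} \<and>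
                  wy i j \<in> {grid_node c d n j..grid_node c d n (Suc j)}) \<longrightarrow>
     (\<Sum>i<n. \<Sum>j<n. \<bar>F (wx i j) (wy i j) - F (grid_node a b n i) (grid_node c d n j)\<bar>) \<le> C * real n)"

lemma grid_node_ge: "a \<le> b \<Longrightarrow> a \<le> grid_node a b n i"
  by (simp add: grid_node_def)

lemma grid_node_le:
  assumes "a \<le> b" "i \<le> n"
  shows "grid_node a b n i \<le> b"
proof (cases "n = 0")
  case False
  have "real i * (b - a) \<le> real n * (b - a)" using assms by (intro mult_right_mono) auto
  hence "real i * (b - a) / real n \<le> b - a" using False by (simp add: divide_le_eq mult.commute)
  thus ?thesis by (simp add: grid_node_def)
qed (use assms in \<open>simp add: grid_node_def\<close>)

lemma grid_node_mono: "a \<le> b \<Longrightarrow> grid_node a b n i \<le> grid_node a b n (Suc i)"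
  unfolding grid_node_def by (intro add_left_mono divide_right_mono mult_right_mono) auto

lemma grid_node_Suc: "n > 0 \<Longrightarrow> grid_node a b n (Suc i) = grid_node a b n i + (b - a) / real n"
  by (simp add: grid_node_def field_simps)

lemma grid_cell_exists:
  assumes "a < b" "0 < n" "x \<in> {a..b}"
  shows "\<exists>i<n. x \<in> {grid_node a b n i..grid_node a b n (Suc i)}"
proof -
  define t where "t = (x - a) * real n / (b - a)"
  have t: "0 \<le> t" "t \<le> real n" unfolding t_def using assms by (auto simp: divide_le_eq)
  have xt: "x = a + t * (b - a) / real n" unfolding t_def using assms by (simp add: field_simps)
  define i where "i = (if t = real n then n - 1 else nat \<lfloor>t\<rfloor>)"
  have "real i \<le> t" "t \<le> real (Suc i)" "i < n"
    unfolding i_def using t assms(2) by (auto simp: of_nat_diff) linarith+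
  hence "x \<in> {grid_node a b n i..grid_node a b n (Suc i)}"
    unfolding xt grid_node_def using assms
    by (auto intro!: add_left_mono divide_right_mono mult_right_mono simp del: of_nat_Suc)
  thus ?thesis using \<open>i < n\<close> by blast
qed

lemma convolution_bounded_grid_oscillation:
  fixes F :: "real \<Rightarrow> real \<Rightarrow> real" and \<Psi> G :: "real \<times> real \<Rightarrow> real"
  assumes ab: "0 < a" "a \<le> b" "0 < c" "c \<le> d" and PQ: "P > 0" "Q > 0"
    and \<Psi>: "integrable lborel \<Psi>" "\<And>v. \<Psi> v \<ge> 0"
    and G: "G \<in> borel_measurable borel" "\<And>z. \<bar>G z\<bar> \<le> M"
      "\<And>L. sorted_wrt (\<le>) L \<Longrightarrow> chain_variation G L \<le> K"
    and F: "\<And>x y. x \<in> {a..b} \<Longrightarrow> y \<in> {c..d} \<Longrightarrow>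
      F x y = \<kappa> * (LINT v|lborel. \<Psi> v * G ((x powr P, y powr Q) + v))"
  shows "bounded_grid_oscillation a b c d F (2 * \<bar>\<kappa>\<bar> * K * (LINT v|lborel. \<Psi> v))"
  unfolding bounded_grid_oscillation_def
proof (intro allI impI)
  fix n and wx wy :: "nat \<Rightarrow> nat \<Rightarrow> real"
  assume w: "\<forall>i<n. \<forall>j<n. wx i j \<in> {grid_node a b n i..grid_node a b n (Suc i)} \<and>
                         wy i j \<in> {grid_node c d n j..grid_node c d n (Suc j)}"
  define xg where "xg = grid_node a b n"
  define yg where "yg = grid_node c d n"
  define \<xi> where "\<xi> i = xg i powr P" for i
  define \<eta> where "\<eta> j = yg j powr Q" for j
  define W where "W i j = (if i < n \<and> j < n then (wx i j powr P, wy i j powr Q) else (\<xi> i, \<eta> j))" for i j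
  define \<Phi> where "\<Phi> Z = (LINT v|lborel. \<Psi> v * G (Z + v))" for Z
  have xg: "a \<le> xg i" "xg i \<le> xg (Suc i)" and yg: "c \<le> yg j" "yg j \<le> yg (Suc j)" for i j
    unfolding xg_def yg_def using ab by (auto intro: grid_node_ge grid_node_mono)
  have xg0: "0 \<le> xg i" and yg0: "0 \<le> yg j" for i j using xg(1)[of i] yg(1)[of j] ab by linarith+
  have W1: "(\<xi> i, \<eta> j) \<le> W i j" for i j
    using w xg[of i] yg[of j] ab PQ unfolding W_def \<xi>_def \<eta>_def
    by (auto simp: xg_def yg_def intro!: powr_mono2)
  have W2: "W i j \<le> (\<xi> (Suc i), \<eta> (Suc j))" for i j
  proof (cases "i < n \<and> j < n")
    case True
    have "a \<le> wx i j" "c \<le> wy i j" using w True xg[of i] yg[of j] unfolding xg_def yg_def by force+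
    thus ?thesis using True w ab PQ unfolding W_def \<xi>_def \<eta>_def
      by (auto simp: xg_def yg_def intro!: powr_mono2)
  qed (use xg yg xg0 yg0 PQ in \<open>auto simp: W_def \<xi>_def \<eta>_def intro!: powr_mono2\<close>)
  have increment: "\<bar>F (wx i j) (wy i j) - F (xg i) (yg j)\<bar> = \<bar>\<kappa>\<bar> * \<bar>\<Phi> (W i j) - \<Phi> (\<xi> i, \<eta> j)\<bar>"
    if ij: "i < n" "j < n" for i j
  proof -
    have "xg (Suc i) \<le> b" "yg (Suc j) \<le> d" unfolding xg_def yg_def using ab ij by (auto intro!: grid_node_le)
    hence "xg i \<in> {a..b}" "yg j \<in> {c..d}" and w_in: "wx i j \<in> {a..b}" "wy i j \<in> {c..d}"
      using xg[of i] yg[of j] w ij unfolding xg_def yg_def by force+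
    thus ?thesis using ij unfolding F[OF w_in] F[OF \<open>xg i \<in> {a..b}\<close> \<open>yg j \<in> {c..d}\<close>]
      unfolding \<Phi>_def W_def \<xi>_def \<eta>_def by (simp add: abs_mult[symmetric] right_diff_distrib)
  qed
  have "(\<Sum>i<n. \<Sum>j<n. \<bar>F (wx i j) (wy i j) - F (xg i) (yg j)\<bar>)
      = \<bar>\<kappa>\<bar> * (\<Sum>i<n. \<Sum>j<n. \<bar>\<Phi> (W i j) - \<Phi> (\<xi> i, \<eta> j)\<bar>)"
    by (simp add: increment sum_distrib_left)
  also have "\<dots> \<le> \<bar>\<kappa>\<bar> * (2 * real n * K * (LINT v|lborel. \<Psi> v))"
    unfolding \<Phi>_def
    by (intro mult_left_mono grid_increment_sum_convolution_le[where \<xi>=\<xi> and \<eta>=\<eta> and W=W, OF \<Psi> G W1 W2]) auto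
  finally show "(\<Sum>i<n. \<Sum>j<n. \<bar>F (wx i j) (wy i j) - F (grid_node a b n i) (grid_node c d n j)\<bar>)
      \<le> 2 * \<bar>\<kappa>\<bar> * K * (LINT v|lborel. \<Psi> v) * real n"
    unfolding xg_def yg_def by (simp add: mult_ac)
qed

lemma katugampola_int_bounded_grid_oscillation:
  fixes f :: "real \<Rightarrow> real \<Rightarrow> real"
  assumes ab: "0 < a" "a \<le> b" "0 < c" "c \<le> d"
    and pq: "p > -1" "q > -1" and \<alpha>\<beta>: "\<alpha> > 0" "\<beta> > 0"
    and fc: "continuous_on ({a..b} \<times> {c..d}) (\<lambda>(x, y). f x y)"
    and bv: "arzela_bv a b c d f"
  obtains C where "bounded_grid_oscillation a b c d (katugampola_int p q a c \<alpha> \<beta> f) C"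
proof -
  define P where "P = p + 1"
  define Q where "Q = q + 1"
  have PQ: "P > 0" "Q > 0" using pq unfolding P_def Q_def by auto
  define \<Psi> where "\<Psi> = frac_kernel_prod \<alpha> \<beta> (a powr P - b powr P) (c powr Q - d powr Q)"
  obtain M where M: "\<And>s t. s \<in> {a..b} \<Longrightarrow> t \<in> {c..d} \<Longrightarrow> \<bar>f s t\<bar> \<le> M" "M \<ge> 0"
    using continuous_on_rectangle_bound[OF fc] by blast
  obtain Kf where Kf: "\<And>L. sorted_wrt (\<le>) L \<Longrightarrow> set L \<subseteq> {a..b} \<times> {c..d} \<Longrightarrow>
      chain_variation (case_prod f) L \<le> Kf"
    using arzela_bv_imp_chain_variation_bounded[OF bv] ab by auto
  have \<Psi>_int: "integrable lborel \<Psi>" unfolding \<Psi>_def using ab PQ \<alpha>\<beta>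
    by (intro integrable_frac_kernel_prod) (auto intro: powr_mono2)
  have "bounded_grid_oscillation a b c d (katugampola_int p q a c \<alpha> \<beta> f)
    (2 * \<bar>(p + 1) powr (1 - \<alpha>) * (q + 1) powr (1 - \<beta>) / (Gamma \<alpha> * Gamma \<beta> * (p + 1) * (q + 1))\<bar>
       * (Kf + M) * (LINT v|lborel. \<Psi> v))"
  proof (rule convolution_bounded_grid_oscillation[OF ab PQ \<Psi>_int])
    show "\<Psi> v \<ge> 0" for v unfolding \<Psi>_def by (rule frac_kernel_prod_nonneg)
    show "power_coord_ext P Q a b c d f \<in> borel_measurable borel"
      by (rule borel_measurable_power_coord_ext[OF fc ab PQ])
    show "\<bar>power_coord_ext P Q a b c d f z\<bar> \<le> M" for z by (rule abs_power_coord_ext_le[OF M ab PQ])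
    show "chain_variation (power_coord_ext P Q a b c d f) L \<le> Kf + M" if "sorted_wrt (\<le>) L" for L
      by (rule chain_variation_power_coord_ext_le[OF Kf M ab PQ that])
  qed (unfold \<Psi>_def P_def Q_def, rule katugampola_int_eq_convolution[OF fc ab pq \<alpha>\<beta>])
  thus ?thesis by (rule that)
qed

section \<open>Covers of the graph\<close>

definition delta_cover :: "real \<Rightarrow> 'a::metric_space set \<Rightarrow> nat \<Rightarrow> bool" where
  "delta_cover \<delta> F n \<longleftrightarrow>
     (\<exists>U :: nat \<Rightarrow> 'a set. F \<subseteq> (\<Union>i<n. U i) \<and> (\<forall>i<n. bounded (U i) \<and> diameter (U i) \<le> \<delta>))"

lemma cover_number_le: "delta_cover \<delta> F n \<Longrightarrow> cover_number \<delta> F \<le> n"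
  unfolding cover_number_def delta_cover_def by (rule Least_le)

lemma delta_cover_cover_number: "delta_cover \<delta> F n \<Longrightarrow> delta_cover \<delta> F (cover_number \<delta> F)"
  unfolding cover_number_def delta_cover_def by (rule LeastI)

lemma delta_cover_card:
  assumes "finite \<U>" "F \<subseteq> \<Union>\<U>" "\<And>U. U \<in> \<U> \<Longrightarrow> bounded U \<and> diameter U \<le> \<delta>"
  shows "delta_cover \<delta> F (card \<U>)"
proof -
  obtain e where "bij_betw e {..<card \<U>} \<U>"
    using ex_bij_betw_nat_finite[OF assms(1)] by (auto simp: lessThan_atLeast0)
  hence "e ` {..<card \<U>} = \<U>" by (simp add: bij_betw_def)
  thus ?thesis unfolding delta_cover_def using assms(2,3) by (intro exI[of _ e]) auto
qed

lemma sum_Sup_le: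
  fixes S :: "'i \<Rightarrow> real set"
  assumes "finite I" "\<And>i. i \<in> I \<Longrightarrow> S i \<noteq> {}" "\<And>i. i \<in> I \<Longrightarrow> bdd_above (S i)"
    and B: "\<And>w. (\<And>i. i \<in> I \<Longrightarrow> w i \<in> S i) \<Longrightarrow> (\<Sum>i\<in>I. w i) \<le> B"
  shows "(\<Sum>i\<in>I. Sup (S i)) \<le> B"
proof (rule field_le_epsilon)
  fix e :: real assume e: "e > 0"
  define e' where "e' = e / (real (card I) + 1)"
  have e': "e' > 0" unfolding e'_def using e by simp
  have "\<exists>s. s \<in> S i \<and> Sup (S i) - e' < s" if "i \<in> I" for i
    using less_cSupD[OF assms(2)[OF that], of "Sup (S i) - e'"] e' by auto
  then obtain w where w: "\<And>i. i \<in> I \<Longrightarrow> w i \<in> S i \<and> Sup (S i) - e' < w i" by metis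
  have "(\<Sum>i\<in>I. Sup (S i)) \<le> (\<Sum>i\<in>I. w i + e')" using w by (intro sum_mono) (smt (verit))
  also have "\<dots> = (\<Sum>i\<in>I. w i) + real (card I) * e'" by (simp add: sum.distrib)
  also have "\<dots> \<le> B + real (card I) * e'" using B w by simp
  also have "real (card I) * e' \<le> e" unfolding e'_def using e by (simp add: field_simps)
  finally show "(\<Sum>i\<in>I. Sup (S i)) \<le> B + e" by simp
qed

lemma bounded_grid_oscillation_cell_le:
  fixes F :: "real \<Rightarrow> real \<Rightarrow> real"
  assumes osc: "bounded_grid_oscillation a b c d F C" and ab: "a \<le> b" "c \<le> d"
    and ij: "i < n" "j < n" and x: "x \<in> {grid_node a b n i..grid_node a b n (Suc i)}"
    and y: "y \<in> {grid_node c d n j..grid_node c d n (Suc j)}"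
  shows "\<bar>F x y - F (grid_node a b n i) (grid_node c d n j)\<bar> \<le> C * real n"
proof -
  define wx where "wx k l = (if k = i \<and> l = j then x else grid_node a b n k)" for k l
  define wy where "wy k l = (if k = i \<and> l = j then y else grid_node c d n l)" for k l
  have "(\<Sum>k<n. \<Sum>l<n. \<bar>F (wx k l) (wy k l) - F (grid_node a b n k) (grid_node c d n l)\<bar>) \<le> C * real n"
    using osc x y ab grid_node_mono unfolding bounded_grid_oscillation_def wx_def wy_def by auto
  moreover have "(\<Sum>k<n. \<Sum>l<n. \<bar>F (wx k l) (wy k l) - F (grid_node a b n k) (grid_node c d n l)\<bar>)
      = \<bar>F x y - F (grid_node a b n i) (grid_node c d n j)\<bar>"
  proof -
    have "\<bar>F (wx k l) (wy k l) - F (grid_node a b n k) (grid_node c d n l)\<bar> = (if l = j then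
        if k = i then \<bar>F x y - F (grid_node a b n i) (grid_node c d n j)\<bar> else 0 else 0)" for k l
      by (simp add: wx_def wy_def)
    thus ?thesis using ij by simp
  qed
  ultimately show ?thesis by simp
qed
text \<open>A bound on the total grid oscillation controls the sum of the individual oscillations on the
  cells, because a point can be chosen independently in each cell.\<close>

lemma bounded_grid_oscillation_cell_bounds:
  fixes F :: "real \<Rightarrow> real \<Rightarrow> real"
  assumes osc: "bounded_grid_oscillation a b c d F C" and ab: "a \<le> b" "c \<le> d"
  obtains r where "\<And>i j. 0 \<le> r i j"
    "\<And>i j x y. i < n \<Longrightarrow> j < n \<Longrightarrow> x \<in> {grid_node a b n i..grid_node a b n (Suc i)} \<Longrightarrow>
       y \<in> {grid_node c d n j..grid_node c d n (Suc j)} \<Longrightarrow>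
       \<bar>F x y - F (grid_node a b n i) (grid_node c d n j)\<bar> \<le> r i j"
    "(\<Sum>i<n. \<Sum>j<n. r i j) \<le> C * real n"
proof -
  define I where "I = {..<n} \<times> {..<n}"
  define dev where "dev ij x y = \<bar>F x y - F (grid_node a b n (fst ij)) (grid_node c d n (snd ij))\<bar>"
    for ij x y
  define incell where "incell ij x y \<longleftrightarrow>
      x \<in> {grid_node a b n (fst ij)..grid_node a b n (Suc (fst ij))} \<and>
      y \<in> {grid_node c d n (snd ij)..grid_node c d n (Suc (snd ij))}" for ij x y
  define S where "S ij = {dev ij x y | x y. incell ij x y}" for ij
  have corner: "incell ij (grid_node a b n (fst ij)) (grid_node c d n (snd ij))" for ij
    unfolding incell_def using ab grid_node_mono by auto
  have total: "(\<Sum>ij\<in>I. dev ij (X ij) (Y ij)) \<le> C * real n"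
    if XY: "\<And>ij. ij \<in> I \<Longrightarrow> incell ij (X ij) (Y ij)" for X Y
  proof -
    have "(\<Sum>ij\<in>I. dev ij (X ij) (Y ij)) = (\<Sum>i<n. \<Sum>j<n.
        \<bar>F (X (i, j)) (Y (i, j)) - F (grid_node a b n i) (grid_node c d n j)\<bar>)"
      by (simp add: I_def dev_def sum.cartesian_product split_beta)
    also have "\<dots> \<le> C * real n"
      using osc XY unfolding bounded_grid_oscillation_def I_def incell_def by auto
    finally show ?thesis .
  qed
  have S_bound: "s \<le> C * real n" if ij: "ij \<in> I" and s: "s \<in> S ij" for ij s
    using s ij bounded_grid_oscillation_cell_le[OF osc ab]
    unfolding S_def I_def dev_def incell_def by auto
  have ne: "S ij \<noteq> {}" for ij using corner unfolding S_def by blast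
  have bdd: "bdd_above (S ij)" if "ij \<in> I" for ij using S_bound[OF that] by (auto simp: bdd_above_def)
  define r where "r i j = (if (i, j) \<in> I then Sup (S (i, j)) else 0)" for i j
  have dev_le: "dev (i, j) x y \<le> r i j" if "(i, j) \<in> I" "incell (i, j) x y" for i j x y
  proof -
    have "dev (i, j) x y \<in> S (i, j)" unfolding S_def using that(2) by blast
    thus ?thesis unfolding r_def using that(1) by (simp add: cSup_upper[OF _ bdd])
  qed
  show ?thesis
  proof (rule that)
    show "0 \<le> r i j" for i j
      using dev_le[OF _ corner, of i j] by (cases "(i, j) \<in> I") (auto simp: dev_def r_def)
    show "\<bar>F x y - F (grid_node a b n i) (grid_node c d n j)\<bar> \<le> r i j"
      if cell: "i < n" "j < n" "x \<in> {grid_node a b n i..grid_node a b n (Suc i)}"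
        "y \<in> {grid_node c d n j..grid_node c d n (Suc j)}" for i j x y
      using dev_le[of i j x y] cell by (simp add: I_def dev_def incell_def)
    have "(\<Sum>i<n. \<Sum>j<n. r i j) = (\<Sum>ij\<in>I. Sup (S ij))"
      by (simp add: I_def r_def sum.cartesian_product split_beta)
    also have "\<dots> \<le> C * real n"
    proof (rule sum_Sup_le)
      fix w assume "\<And>ij. ij \<in> I \<Longrightarrow> w ij \<in> S ij"
      hence "\<forall>ij\<in>I. \<exists>xy. w ij = dev ij (fst xy) (snd xy) \<and> incell ij (fst xy) (snd xy)"
        unfolding S_def by fastforce
      then obtain XY where "\<And>ij. ij \<in> I \<Longrightarrow> w ij = dev ij (fst (XY ij)) (snd (XY ij))
          \<and> incell ij (fst (XY ij)) (snd (XY ij))"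
        by metis
      thus "(\<Sum>ij\<in>I. w ij) \<le> C * real n" using total[of "fst \<circ> XY" "snd \<circ> XY"] by simp
    qed (use ne bdd in \<open>auto simp: I_def\<close>)
    finally show "(\<Sum>i<n. \<Sum>j<n. r i j) \<le> C * real n" .
  qed
qed

lemma delta_cover_mono: "delta_cover \<delta> F n \<Longrightarrow> \<delta> \<le> \<delta>' \<Longrightarrow> delta_cover \<delta>' F n"
  unfolding delta_cover_def by (meson order_trans)

lemma card_floor_interval_le:
  fixes u v :: real
  assumes "u \<le> v"
  shows "real (card {\<lfloor>u\<rfloor>..\<lfloor>v\<rfloor>}) \<le> v - u + 2"
proof -
  have "\<lfloor>v\<rfloor> - \<lfloor>u\<rfloor> + 1 \<ge> 0" using assms floor_mono by fastforce
  hence "real (card {\<lfloor>u\<rfloor>..\<lfloor>v\<rfloor>}) = real_of_int (\<lfloor>v\<rfloor> - \<lfloor>u\<rfloor> + 1)" by simp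
  also have "\<dots> \<le> v - u + 2" by linarith
  finally show ?thesis .
qed

lemma diameter_box_le:
  fixes x1 x2 y1 y2 z1 z2 h :: real
  assumes "x2 - x1 \<le> h" "y2 - y1 \<le> h" "z2 - z1 \<le> h" "h \<ge> 0"
  shows "diameter ({x1..x2} \<times> {y1..y2} \<times> {z1..z2}) \<le> 3 * h"
proof (rule diameter_le)
  fix p q assume "p \<in> {x1..x2} \<times> {y1..y2} \<times> {z1..z2}" "q \<in> {x1..x2} \<times> {y1..y2} \<times> {z1..z2}"
  moreover obtain u1 v1 w1 u2 v2 w2 where "p = (u1, v1, w1)" "q = (u2, v2, w2)" by (metis prod.exhaust)
  ultimately have pq: "p - q = (u1 - u2, v1 - v2, w1 - w2)" "\<bar>u1 - u2\<bar> \<le> h" "\<bar>v1 - v2\<bar> \<le> h" "\<bar>w1 - w2\<bar> \<le> h"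
    using assms by auto
  have "norm (p - q) \<le> \<bar>u1 - u2\<bar> + (\<bar>v1 - v2\<bar> + \<bar>w1 - w2\<bar>)"
    unfolding pq(1) using norm_Pair_le[of "u1 - u2" "(v1 - v2, w1 - w2)"] norm_Pair_le[of "v1 - v2" "w1 - w2"]
    by simp
  thus "norm (p - q) \<le> 3 * h" using pq(2-4) by linarith
qed (use assms in auto)

text \<open>Over a cell of side at most \<open>h\<close> on which \<open>F\<close> deviates from its corner value by at most \<open>r\<close>,
  the graph is covered by at most \<open>2 r / h + 2\<close> boxes of side \<open>h\<close> stacked vertically.\<close>

lemma graph_delta_cover_from_cell_bounds:
  fixes F :: "real \<Rightarrow> real \<Rightarrow> real"
  assumes ab: "a < b" "c < d" and n: "n > 0"
    and h: "h > 0" "(b - a) / real n \<le> h" "(d - c) / real n \<le> h"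
    and r: "\<And>i j. 0 \<le> r i j"
    and dev: "\<And>i j x y. i < n \<Longrightarrow> j < n \<Longrightarrow> x \<in> {grid_node a b n i..grid_node a b n (Suc i)} \<Longrightarrow>
       y \<in> {grid_node c d n j..grid_node c d n (Suc j)} \<Longrightarrow>
       \<bar>F x y - F (grid_node a b n i) (grid_node c d n j)\<bar> \<le> r i j"
  shows "\<exists>N. delta_cover (3 * h) (graph2 a b c d F) N
    \<and> real N \<le> 2 / h * (\<Sum>i<n. \<Sum>j<n. r i j) + 2 * (real n)\<^sup>2"
proof -
  define xg where "xg = grid_node a b n"
  define yg where "yg = grid_node c d n"
  define F0 where "F0 i j = F (xg i) (yg j)" for i j
  define Box where "Box ij k = {xg (fst ij)..xg (Suc (fst ij))} \<times>
      ({yg (snd ij)..yg (Suc (snd ij))} \<times> {real_of_int k * h..(real_of_int k + 1) * h})" for ij and k :: int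
  define Ks where "Ks ij = {\<lfloor>(F0 (fst ij) (snd ij) - r (fst ij) (snd ij)) / h\<rfloor>..
      \<lfloor>(F0 (fst ij) (snd ij) + r (fst ij) (snd ij)) / h\<rfloor>}" for ij
  define I where "I = {..<n} \<times> {..<n}"
  define \<U> where "\<U> = (\<lambda>(ij, k). Box ij k) ` Sigma I Ks"
  have fin: "finite (Sigma I Ks)" unfolding I_def Ks_def by auto
  have "real (card \<U>) \<le> real (card (Sigma I Ks))"
    unfolding \<U>_def using fin card_image_le by (simp del: card_SigmaI)
  also have "\<dots> = (\<Sum>ij\<in>I. real (card (Ks ij)))"
    by (subst card_SigmaI) (auto simp: I_def Ks_def)
  also have "\<dots> \<le> (\<Sum>ij\<in>I. 2 * r (fst ij) (snd ij) / h + 2)"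
  proof (rule sum_mono)
    fix ij
    have "(F0 (fst ij) (snd ij) - r (fst ij) (snd ij)) / h \<le> (F0 (fst ij) (snd ij) + r (fst ij) (snd ij)) / h"
      using r h by (intro divide_right_mono) (auto intro: add_increasing2)
    from card_floor_interval_le[OF this] h show "real (card (Ks ij)) \<le> 2 * r (fst ij) (snd ij) / h + 2"
      unfolding Ks_def by (simp add: field_simps)
  qed
  also have "\<dots> = 2 / h * (\<Sum>i<n. \<Sum>j<n. r i j) + 2 * (real n)\<^sup>2"
    by (simp add: I_def sum.cartesian_product sum.distrib sum_distrib_left sum_divide_distrib
        split_beta power2_eq_square)
  finally have card: "real (card \<U>) \<le> 2 / h * (\<Sum>i<n. \<Sum>j<n. r i j) + 2 * (real n)\<^sup>2" .
  have cov: "graph2 a b c d F \<subseteq> \<Union>\<U>"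
  proof
    fix z assume "z \<in> graph2 a b c d F"
    then obtain x y where z: "z = (x, y, F x y)" "x \<in> {a..b}" "y \<in> {c..d}" unfolding graph2_def by blast
    obtain i where i: "i < n" "x \<in> {xg i..xg (Suc i)}" using grid_cell_exists ab(1) n z(2) unfolding xg_def by blast
    obtain j where j: "j < n" "y \<in> {yg j..yg (Suc j)}" using grid_cell_exists ab(2) n z(3) unfolding yg_def by blast
    define k where "k = \<lfloor>F x y / h\<rfloor>"
    have "F0 i j - r i j \<le> F x y" "F x y \<le> F0 i j + r i j"
      using dev[OF i(1) j(1)] i(2) j(2) unfolding F0_def xg_def yg_def by force+
    hence "k \<in> Ks (i, j)" unfolding Ks_def k_def using h(1) by (auto intro!: floor_mono divide_right_mono)
    moreover have "real_of_int k \<le> F x y / h" "F x y / h \<le> real_of_int k + 1"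
      unfolding k_def by linarith+
    hence "real_of_int k * h \<le> F x y" "F x y \<le> (real_of_int k + 1) * h"
      using h(1) by (simp_all add: field_simps)
    ultimately show "z \<in> \<Union>\<U>" unfolding \<U>_def Box_def I_def z using i j by force
  qed
  have boxes: "bounded U \<and> diameter U \<le> 3 * h" if U_mem: "U \<in> \<U>" for U
  proof -
    obtain i j k where U: "U = Box (i, j) k" using U_mem unfolding \<U>_def by auto
    have "xg (Suc i) - xg i \<le> h" "yg (Suc j) - yg j \<le> h"
      unfolding xg_def yg_def using n h by (simp_all add: grid_node_Suc)
    hence "diameter U \<le> 3 * h" unfolding U Box_def using h(1)
      by (intro diameter_box_le) (auto simp: algebra_simps)
    moreover have "bounded U" unfolding U Box_def by (intro bounded_Times bounded_closed_interval)
    ultimately show ?thesis by simp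
  qed
  show ?thesis using delta_cover_card[OF _ cov boxes] fin card unfolding \<U>_def by blast
qed

lemma bounded_grid_oscillation_nonneg:
  assumes "bounded_grid_oscillation a b c d F C" "a \<le> b" "c \<le> d"
  shows "C \<ge> 0"
proof -
  have "(\<Sum>i<1. \<Sum>j<1. \<bar>F a c - F (grid_node a b 1 i) (grid_node c d 1 j)\<bar>) \<le> C * real 1"
    using assms unfolding bounded_grid_oscillation_def
    by (intro assms(1)[unfolded bounded_grid_oscillation_def, rule_format]) (simp add: grid_node_def)
  moreover have "0 \<le> (\<Sum>i<1. \<Sum>j<1. \<bar>F a c - F (grid_node a b 1 i) (grid_node c d 1 j)\<bar>)"
    by (intro sum_nonneg) auto
  ultimately show ?thesis by simp
qed

lemma bounded_grid_oscillation_delta_cover: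
  fixes F :: "real \<Rightarrow> real \<Rightarrow> real"
  assumes osc: "bounded_grid_oscillation a b c d F C" and ab: "a < b" "c < d"
  obtains C2 where "\<And>\<delta>. 0 < \<delta> \<Longrightarrow> \<delta> \<le> max (b - a) (d - c) \<Longrightarrow>
    \<exists>N. delta_cover \<delta> (graph2 a b c d F) N \<and> real N \<le> C2 / \<delta> powr 2"
proof -
  define L where "L = max (b - a) (d - c)"
  have L: "L > 0" "b - a \<le> L" "d - c \<le> L" unfolding L_def using ab by auto
  have C: "C \<ge> 0" using bounded_grid_oscillation_nonneg[OF osc] ab by simp
  have "\<exists>N. delta_cover \<delta> (graph2 a b c d F) N \<and> real N \<le> 16 * L\<^sup>2 * (2 * C / L + 2) / \<delta> powr 2"
    if \<delta>: "0 < \<delta>" "\<delta> \<le> L" for \<delta>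
  proof -
    define n where "n = nat \<lceil>3 * L / \<delta>\<rceil>"
    have n_ge: "3 * L / \<delta> \<le> real n" unfolding n_def by linarith
    have "1 \<le> L / \<delta>" using \<delta> by simp
    hence n: "n > 0" "real n \<le> 4 * L / \<delta>" using n_ge unfolding n_def by linarith+
    define h where "h = L / real n"
    have h: "h > 0" "(b - a) / real n \<le> h" "(d - c) / real n \<le> h"
      unfolding h_def using L n by (auto intro!: divide_right_mono)
    have "3 * L \<le> real n * \<delta>" using n_ge \<delta> by (simp add: divide_le_eq mult.commute)
    hence h3: "3 * h \<le> \<delta>" unfolding h_def using n by (simp add: field_simps)
    obtain r where r: "\<And>i j. 0 \<le> r i j" "(\<Sum>i<n. \<Sum>j<n. r i j) \<le> C * real n"
      and dev: "\<And>i j x y. i < n \<Longrightarrow> j < n \<Longrightarrow> x \<in> {grid_node a b n i..grid_node a b n (Suc i)} \<Longrightarrow>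
       y \<in> {grid_node c d n j..grid_node c d n (Suc j)} \<Longrightarrow>
       \<bar>F x y - F (grid_node a b n i) (grid_node c d n j)\<bar> \<le> r i j"
      using bounded_grid_oscillation_cell_bounds[OF osc] ab by (metis less_imp_le)
    obtain N where N: "delta_cover (3 * h) (graph2 a b c d F) N"
      "real N \<le> 2 / h * (\<Sum>i<n. \<Sum>j<n. r i j) + 2 * (real n)\<^sup>2"
      using graph_delta_cover_from_cell_bounds[where r=r and F=F, OF ab n(1) h r(1) dev] by blast
    have "real N \<le> 2 / h * (C * real n) + 2 * (real n)\<^sup>2"
      using N(2) r(2) h(1) by (smt (verit) divide_pos_pos mult_left_mono)
    also have "\<dots> = (real n)\<^sup>2 * (2 * C / L + 2)"
      unfolding h_def using L n by (simp add: field_simps power2_eq_square)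
    also have "\<dots> \<le> (4 * L / \<delta>)\<^sup>2 * (2 * C / L + 2)"
      using n L C by (intro mult_right_mono power_mono) auto
    also have "\<dots> = 16 * L\<^sup>2 * (2 * C / L + 2) / \<delta> powr 2"
      using \<delta> by (simp add: field_simps power2_eq_square powr_numeral)
    finally show ?thesis using delta_cover_mono[OF N(1) h3] by blast
  qed
  thus ?thesis using that unfolding L_def by blast
qed

lemma graph_area_le_sum_diameter:
  fixes g :: "real \<Rightarrow> real \<Rightarrow> real" and U :: "nat \<Rightarrow> (real \<times> real \<times> real) set"
  assumes ab: "a \<le> b" "c \<le> d" and cov: "graph2 a b c d g \<subseteq> (\<Union>i. U i)" and bd: "\<And>i. bounded (U i)"
  shows "ennreal ((b - a) * (d - c)) \<le> (\<Sum>i. ennreal (4 * (diameter (U i))\<^sup>2))"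
proof -
  define D where "D i = diameter (U i)" for i
  define p where "p i = (SOME z. z \<in> U i)" for i
  define Q where "Q i = (if U i = {} then {} else
     cbox (fst (p i) - D i, fst (snd (p i)) - D i) (fst (p i) + D i, fst (snd (p i)) + D i))" for i
  have D0: "D i \<ge> 0" for i unfolding D_def by (rule diameter_ge_0[OF bd])
  have sub: "cbox (a, c) (b, d) \<subseteq> (\<Union>i. Q i)"
  proof
    fix z :: "real \<times> real" assume z: "z \<in> cbox (a, c) (b, d)"
    obtain x y where xy: "z = (x, y)" by (cases z)
    have "x \<in> {a..b}" "y \<in> {c..d}" using z xy by (auto simp: cbox_Pair_iff)
    hence "(x, y, g x y) \<in> graph2 a b c d g" unfolding graph2_def by blast
    then obtain i where i: "(x, y, g x y) \<in> U i" using cov by auto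
    hence ne: "U i \<noteq> {}" by auto
    have pi: "p i \<in> U i" unfolding p_def using ne by (metis ex_in_conv someI)
    have "dist (x, y, g x y) (p i) \<le> D i" unfolding D_def by (rule diameter_bounded_bound[OF bd i pi])
    moreover have "\<bar>x - fst (p i)\<bar> \<le> dist (x, y, g x y) (p i)"
      using dist_fst_le[of "(x, y, g x y)" "p i"] by (simp add: dist_real_def)
    moreover have "\<bar>y - fst (snd (p i))\<bar> \<le> dist (x, y, g x y) (p i)"
      using dist_snd_le[of "(x, y, g x y)" "p i"] dist_fst_le[of "(y, g x y)" "snd (p i)"]
      by (simp add: dist_real_def)
    ultimately have "\<bar>x - fst (p i)\<bar> \<le> D i" "\<bar>y - fst (snd (p i))\<bar> \<le> D i" by linarith+
    hence "z \<in> Q i" unfolding Q_def xy using ne by (auto simp: cbox_Pair_iff abs_le_iff)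
    thus "z \<in> (\<Union>i. Q i)" by blast
  qed
  have Qm: "Q i \<in> sets lborel" for i unfolding Q_def by auto
  have Qe: "emeasure lborel (Q i) \<le> ennreal (4 * (diameter (U i))\<^sup>2)" for i
  proof (cases "U i = {}")
    case False
    have "emeasure lborel (Q i) = ennreal ((2 * D i) * (2 * D i))"
      unfolding Q_def using False D0[of i]
      by (simp add: emeasure_lborel_cbox_eq Basis_prod_def inner_prod_def algebra_simps)
    thus ?thesis unfolding D_def by (simp add: power2_eq_square)
  qed (simp add: Q_def)
  have "ennreal ((b - a) * (d - c)) = emeasure lborel (cbox (a, c) (b, d))"
    using ab by (simp add: emeasure_lborel_cbox_eq Basis_prod_def inner_prod_def)
  also have "\<dots> \<le> emeasure lborel (\<Union>i. Q i)" using sub Qm by (intro emeasure_mono) auto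
  also have "\<dots> \<le> (\<Sum>i. emeasure lborel (Q i))" using Qm by (intro emeasure_subadditive_countably) auto
  also have "\<dots> \<le> (\<Sum>i. ennreal (4 * (diameter (U i))\<^sup>2))" by (intro suminf_le Qe) auto
  finally show ?thesis .
qed

lemma graph_delta_cover_lower:
  fixes g :: "real \<Rightarrow> real \<Rightarrow> real"
  assumes ab: "a \<le> b" "c \<le> d" and "delta_cover \<delta> (graph2 a b c d g) N"
  shows "(b - a) * (d - c) \<le> 4 * real N * \<delta>\<^sup>2"
proof -
  obtain U where cov: "graph2 a b c d g \<subseteq> (\<Union>i<N. U i)"
    and bd: "\<And>i. i < N \<Longrightarrow> bounded (U i) \<and> diameter (U i) \<le> \<delta>"
    using assms(3) unfolding delta_cover_def by blast
  define U' where "U' i = (if i < N then U i else {})" for i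
  have "ennreal ((b - a) * (d - c)) \<le> (\<Sum>i. ennreal (4 * (diameter (U' i))\<^sup>2))"
    by (rule graph_area_le_sum_diameter[OF ab]) (use cov bd in \<open>auto simp: U'_def\<close>)
  also have "\<dots> = (\<Sum>i<N. ennreal (4 * (diameter (U' i))\<^sup>2))"
    by (rule suminf_finite) (auto simp: U'_def)
  also have "\<dots> \<le> (\<Sum>i<N. ennreal (4 * \<delta>\<^sup>2))"
  proof (intro sum_mono ennreal_leI mult_left_mono power_mono)
    fix i assume "i \<in> {..<N}"
    thus "diameter (U' i) \<le> \<delta>" "0 \<le> diameter (U' i)" using bd[of i] unfolding U'_def
      by (auto intro: diameter_ge_0)
  qed simp
  also have "\<dots> = ennreal (4 * real N * \<delta>\<^sup>2)"
    by (simp add: ennreal_of_nat_eq_real_of_nat[symmetric] ennreal_mult' mult_ac)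
  finally show ?thesis using ab by (subst (asm) ennreal_le_iff) auto
qed

section \<open>Box and Hausdorff dimension\<close>

lemma tendsto_div_neg_ln_plus:
  "((\<lambda>\<delta>::real. k / - ln \<delta> + D) \<longlongrightarrow> D) (at_right 0)"
proof -
  have "filterlim (\<lambda>\<delta>::real. - ln \<delta>) at_top (at_right 0)"
    using ln_at_0 by (simp add: filterlim_uminus_at_bot)
  hence "((\<lambda>\<delta>::real. k * inverse (- ln \<delta>) + D) \<longlongrightarrow> k * 0 + D) (at_right 0)"
    by (intro tendsto_intros tendsto_inverse_0_at_top)
  thus ?thesis by (simp add: divide_inverse)
qed

lemma has_box_dim_sandwich:
  fixes F :: "'a::metric_space set"
  assumes A: "A > 0"
    and bounds: "\<forall>\<^sub>F \<delta> in at_right 0. A / \<delta> powr D \<le> real (cover_number \<delta> F)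
        \<and> real (cover_number \<delta> F) \<le> B / \<delta> powr D"
  shows "has_box_dim F D"
  unfolding has_box_dim_def
proof (rule tendsto_sandwich[OF _ _ tendsto_div_neg_ln_plus[of "ln A"] tendsto_div_neg_ln_plus[of "ln B"]])
  have ev: "\<forall>\<^sub>F \<delta> in at_right 0. \<delta> \<in> {0<..<1} \<and> A / \<delta> powr D \<le> real (cover_number \<delta> F)
      \<and> real (cover_number \<delta> F) \<le> B / \<delta> powr D"
    using bounds eventually_at_right_real[OF zero_less_one] by eventually_elim auto
  have key: "ln A / - ln \<delta> + D \<le> ln (real (cover_number \<delta> F)) / - ln \<delta>
      \<and> ln (real (cover_number \<delta> F)) / - ln \<delta> \<le> ln B / - ln \<delta> + D"
    if \<delta>: "0 < \<delta>" "\<delta> < 1" and N: "A / \<delta> powr D \<le> real (cover_number \<delta> F)"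
      "real (cover_number \<delta> F) \<le> B / \<delta> powr D" for \<delta>
  proof -
    define L where "L = - ln \<delta>"
    have L: "L > 0" unfolding L_def using \<delta> by simp
    have pos: "0 < A / \<delta> powr D" using A \<delta> by simp
    hence B: "B > 0" using N \<delta> by (smt (verit) divide_le_0_iff powr_gt_zero)
    have N0: "real (cover_number \<delta> F) > 0" using N(1) pos by linarith
    have "ln (A / \<delta> powr D) \<le> ln (real (cover_number \<delta> F))" using N(1) pos N0 by simp
    moreover have "ln (A / \<delta> powr D) = ln A + D * L" using A \<delta> by (simp add: ln_div L_def)
    moreover have "ln (real (cover_number \<delta> F)) \<le> ln (B / \<delta> powr D)" using N(2) N0 by simp
    moreover have "ln (B / \<delta> powr D) = ln B + D * L" using B \<delta> by (simp add: ln_div L_def)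
    ultimately have "ln A + D * L \<le> ln (real (cover_number \<delta> F))"
      "ln (real (cover_number \<delta> F)) \<le> ln B + D * L" by simp_all
    moreover have "ln A / L + D = (ln A + D * L) / L" "ln B / L + D = (ln B + D * L) / L"
      using L by (simp_all add: field_simps)
    ultimately show ?thesis using L unfolding L_def[symmetric] by (simp add: divide_right_mono)
  qed
  show "\<forall>\<^sub>F \<delta> in at_right 0. ln A / - ln \<delta> + D \<le> ln (real (cover_number \<delta> F)) / - ln \<delta>"
    using ev by eventually_elim (use key in auto)
  show "\<forall>\<^sub>F \<delta> in at_right 0. ln (real (cover_number \<delta> F)) / - ln \<delta> \<le> ln B / - ln \<delta> + D"
    using ev by eventually_elim (use key in auto)
qed

lemma hausdorff_measure_eq_0_of_delta_cover_bound:
  fixes F :: "'a::metric_space set"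
  assumes \<delta>0: "\<delta>0 > 0"
    and covers: "\<And>\<delta>. 0 < \<delta> \<Longrightarrow> \<delta> \<le> \<delta>0 \<Longrightarrow> \<exists>N. delta_cover \<delta> F N \<and> real N \<le> C / \<delta> powr D"
    and D: "D \<ge> 0" and s: "s > D"
  shows "hausdorff_measure s F = 0"
proof -
  obtain N where "real N \<le> C / \<delta>0 powr D" using covers[OF \<delta>0 order_refl] by blast
  hence "0 \<le> C / \<delta>0 powr D" using of_nat_0_le_iff[of N] by linarith
  hence C: "C \<ge> 0" using \<delta>0 by (simp add: zero_le_divide_iff)
  have "hausdorff_approx s \<delta> F \<le> 0" if \<delta>: "\<delta> > 0" for \<delta>
  proof (rule ennreal_le_epsilon)
    fix e :: real assume e: "e > 0"
    define d where "d = min (min \<delta> \<delta>0) ((e / (C + 1)) powr (1 / (s - D)))"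
    have d: "0 < d" "d \<le> \<delta>" "d \<le> \<delta>0" unfolding d_def using \<delta> \<delta>0 e C by auto
    have "d powr (s - D) \<le> ((e / (C + 1)) powr (1 / (s - D))) powr (s - D)"
      unfolding d_def using d s by (intro powr_mono2) auto
    also have "\<dots> = e / (C + 1)" using s e C by (simp add: powr_powr)
    finally have d_small: "d powr (s - D) \<le> e / (C + 1)" .
    obtain N U where U: "F \<subseteq> (\<Union>i<N. U i)" "\<And>i. i < N \<Longrightarrow> bounded (U i) \<and> diameter (U i) \<le> d"
      and N: "real N \<le> C / d powr D"
      using covers[OF d(1,3)] unfolding delta_cover_def by blast
    define V where "V i = (if i < N then U i else {})" for i
    have "(\<Sum>i. ennreal (diameter (V i) powr s)) = (\<Sum>i<N. ennreal (diameter (V i) powr s))"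
      by (rule suminf_finite) (auto simp: V_def)
    also have "\<dots> \<le> (\<Sum>i<N. ennreal (d powr s))"
      using U(2) s D by (intro sum_mono ennreal_leI powr_mono2) (auto simp: V_def intro: diameter_ge_0)
    also have "\<dots> = ennreal (real N * d powr s)"
      by (simp add: ennreal_of_nat_eq_real_of_nat[symmetric] ennreal_mult')
    also have "real N * d powr s \<le> e"
    proof -
      have "real N * d powr s \<le> C / d powr D * d powr s"
        using N by (intro mult_right_mono) auto
      also have "\<dots> = C * d powr (s - D)" using d by (simp add: powr_diff)
      also have "\<dots> \<le> C * (e / (C + 1))" using d_small C by (intro mult_left_mono) auto
      also have "\<dots> \<le> e" using C e by (simp add: field_simps)
      finally show ?thesis .
    qed
    hence "ennreal (real N * d powr s) \<le> ennreal e" by (rule ennreal_leI)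
    finally have "(\<Sum>i. ennreal (diameter (V i) powr s)) \<le> ennreal e" .
    moreover have adm: "V \<in> {U. F \<subseteq> (\<Union>i. U i) \<and> (\<forall>i. bounded (U i) \<and> diameter (U i) \<le> \<delta>)}"
      using U d unfolding V_def by fastforce
    ultimately have "hausdorff_approx s \<delta> F \<le> ennreal e"
      unfolding hausdorff_approx_def by (metis (no_types, lifting) INF_lower2)
    thus "hausdorff_approx s \<delta> F \<le> 0 + ennreal e" by simp
  qed
  thus ?thesis unfolding hausdorff_measure_def by (auto intro!: antisym SUP_least)
qed

lemma graph_hausdorff_measure_pos:
  fixes g :: "real \<Rightarrow> real \<Rightarrow> real"
  assumes ab: "a < b" "c < d" and s: "0 \<le> s" "s \<le> 2"
  shows "hausdorff_measure s (graph2 a b c d g) \<noteq> 0"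
proof -
  define A where "A = (b - a) * (d - c)"
  have A0: "A > 0" unfolding A_def using ab by simp
  have "ennreal (A / 4) \<le> (\<Sum>i. ennreal (diameter (U i) powr s))"
    if U: "graph2 a b c d g \<subseteq> (\<Union>i. U i)" "\<And>i. bounded (U i) \<and> diameter (U i) \<le> 1" for U
  proof -
    have "ennreal A \<le> (\<Sum>i. ennreal (4 * (diameter (U i))\<^sup>2))"
      unfolding A_def by (rule graph_area_le_sum_diameter) (use ab U in auto)
    also have "\<dots> \<le> (\<Sum>i. 4 * ennreal (diameter (U i) powr s))"
    proof (intro suminf_le allI)
      fix i
      have D: "0 \<le> diameter (U i)" "diameter (U i) \<le> 1" using U(2)[of i] by (auto intro: diameter_ge_0)
      have "(diameter (U i))\<^sup>2 \<le> diameter (U i) powr s"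
      proof (cases "diameter (U i) = 0")
        case False
        hence "(diameter (U i))\<^sup>2 = diameter (U i) powr 2" using D by (simp add: powr_numeral)
        also have "\<dots> \<le> diameter (U i) powr s" using D s by (intro powr_mono') auto
        finally show ?thesis .
      qed (use s in simp)
      hence "ennreal (4 * (diameter (U i))\<^sup>2) \<le> ennreal (4 * diameter (U i) powr s)"
        by (intro ennreal_leI) auto
      thus "ennreal (4 * (diameter (U i))\<^sup>2) \<le> 4 * ennreal (diameter (U i) powr s)"
        by (simp add: ennreal_mult')
    qed auto
    also have "\<dots> = 4 * (\<Sum>i. ennreal (diameter (U i) powr s))" by (rule ennreal_suminf_cmult)
    finally have le: "ennreal A \<le> 4 * (\<Sum>i. ennreal (diameter (U i) powr s))" .
    show ?thesis
    proof (cases "\<Sum>i. ennreal (diameter (U i) powr s)" rule: ennreal_cases)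
      case (real r)
      hence "ennreal A \<le> ennreal (4 * r)" using le by (simp add: ennreal_mult')
      hence "A / 4 \<le> r" using real by (subst (asm) ennreal_le_iff) auto
      thus ?thesis using real by (simp add: ennreal_leI)
    qed simp
  qed
  hence "ennreal (A / 4) \<le> hausdorff_approx s 1 (graph2 a b c d g)"
    unfolding hausdorff_approx_def by (intro INF_greatest) blast
  also have "\<dots> \<le> hausdorff_measure s (graph2 a b c d g)"
    unfolding hausdorff_measure_def by (rule SUP_upper) auto
  finally show ?thesis using A0 by auto
qed

lemma hausdorff_dim_eqI:
  fixes F :: "'a::metric_space set"
  assumes "D \<ge> 0" "\<And>s. s > D \<Longrightarrow> hausdorff_measure s F = 0"
    "\<And>s. 0 \<le> s \<Longrightarrow> s \<le> D \<Longrightarrow> hausdorff_measure s F \<noteq> 0"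
  shows "hausdorff_dim F = D"
proof -
  have "{s. s \<ge> 0 \<and> hausdorff_measure s F = 0} = {D<..}"
    using assms by (auto simp: not_less[symmetric])
  thus ?thesis unfolding hausdorff_dim_def by simp
qed

theorem graph_dimension_of_bounded_grid_oscillation:
  fixes F :: "real \<Rightarrow> real \<Rightarrow> real"
  assumes osc: "bounded_grid_oscillation a b c d F C" and ab: "a < b" "c < d"
  shows "has_box_dim (graph2 a b c d F) 2 \<and> hausdorff_dim (graph2 a b c d F) = 2"
proof -
  define Gr where "Gr = graph2 a b c d F"
  define L where "L = max (b - a) (d - c)"
  have L: "L > 0" unfolding L_def using ab by auto
  obtain C2 where covers: "\<And>\<delta>. 0 < \<delta> \<Longrightarrow> \<delta> \<le> L \<Longrightarrow>
      \<exists>N. delta_cover \<delta> Gr N \<and> real N \<le> C2 / \<delta> powr 2"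
    using bounded_grid_oscillation_delta_cover[OF osc ab] unfolding Gr_def L_def by blast
  have "(b - a) * (d - c) / 4 / \<delta> powr 2 \<le> real (cover_number \<delta> Gr)
      \<and> real (cover_number \<delta> Gr) \<le> C2 / \<delta> powr 2" if \<delta>: "\<delta> \<in> {0<..<L}" for \<delta>
  proof -
    obtain N where N: "delta_cover \<delta> Gr N" "real N \<le> C2 / \<delta> powr 2" using covers \<delta> by force
    have "(b - a) * (d - c) \<le> 4 * real (cover_number \<delta> Gr) * \<delta>\<^sup>2"
      unfolding Gr_def
      by (rule graph_delta_cover_lower) (use ab delta_cover_cover_number[OF N(1)] Gr_def in auto)
    hence "(b - a) * (d - c) / 4 / \<delta> powr 2 \<le> real (cover_number \<delta> Gr)"
      using \<delta> by (simp add: powr_numeral field_simps)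
    moreover have "real (cover_number \<delta> Gr) \<le> C2 / \<delta> powr 2"
      using cover_number_le[OF N(1)] N(2) by (meson of_nat_le_iff order_trans)
    ultimately show ?thesis ..
  qed
  hence "\<forall>\<^sub>F \<delta> in at_right 0. (b - a) * (d - c) / 4 / \<delta> powr 2 \<le> real (cover_number \<delta> Gr)
      \<and> real (cover_number \<delta> Gr) \<le> C2 / \<delta> powr 2"
    using eventually_at_right_real[OF L] by (rule eventually_mono[rotated]) 
  hence "has_box_dim Gr 2" by (rule has_box_dim_sandwich[rotated]) (use ab in simp)
  moreover have "hausdorff_dim Gr = 2"
  proof (rule hausdorff_dim_eqI)
    show "hausdorff_measure s Gr = 0" if "s > 2" for s
      by (rule hausdorff_measure_eq_0_of_delta_cover_bound[OF L covers]) (use that in auto)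
    show "hausdorff_measure s Gr \<noteq> 0" if "0 \<le> s" "s \<le> 2" for s
      unfolding Gr_def by (rule graph_hausdorff_measure_pos[OF ab that])
  qed simp
  ultimately show ?thesis unfolding Gr_def by simp
qed

theorem mainTheorem5:
  fixes a b c d p q \<alpha> \<beta> :: real and f :: "real \<Rightarrow> real \<Rightarrow> real"
  assumes "0 < a" "a < b" "0 < c" "c < d"
    and "p > -1" "q > -1" "\<alpha> > 0" "\<beta> > 0"
    and "continuous_on ({a..b} \<times> {c..d}) (\<lambda>(x, y). f x y)"
    and "arzela_bv a b c d f"
  shows "has_box_dim (graph2 a b c d (katugampola_int p q a c \<alpha> \<beta> f)) 2
    \<and> hausdorff_dim (graph2 a b c d (katugampola_int p q a c \<alpha> \<beta> f)) = 2"
proof -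
  have "a \<le> b" "c \<le> d" using assms(2,4) by auto
  then obtain C where "bounded_grid_oscillation a b c d (katugampola_int p q a c \<alpha> \<beta> f) C"
    using katugampola_int_bounded_grid_oscillation[OF assms(1) _ assms(3) _ assms(5-10)] by blast
  thus ?thesis using graph_dimension_of_bounded_grid_oscillation assms(2,4) by blast
qed

end
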